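(* Assume (A0)–(A3) and let $\{(x^k,\lambda^k)\}$ be generated by the NEPJ-ADMM. For every $k\ge1$, with $\Theta_\lambda^k:=\frac{1}{\beta\theta}\|\Delta\lambda^k\|^2+\frac{c_1}{2}\big(\|A_p^*\Delta\lambda^k\|^2-\|A_p^*\Delta\lambda^{k-1}\|^2\big)$, $$\Theta_\lambda^k\le\frac{\gamma_\theta}{\beta\sigma^+_{A_p}}\|u^k\|^2\le\frac{\gamma_\theta(p+1)}{\beta\sigma^+_{A_p}}\Big[\sum_{j=1}^{p-1}\beta^2\|A_p^*A_j\|^2\big(\|\Delta x_j^k\|+\|\Delta x_j^{k-1}\|\big)^2+(L_p^2+M_p^2)\big(\|\Delta x_p^k\|+\|\Delta x_p^{k-1}\|\big)^2\Big].$$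
   Context: Problem: let $p\ge2$, $f_i:\mathbb{R}^{n_i}\to(-\infty,\infty]$ ($i=1,\dots,p$), $A_i\in\mathbb{R}^{d\times n_i}$, $b\in\mathbb{R}^d$, and consider $\min\{\sum_{i=1}^pf_i(x_i):\sum_{i=1}^pA_ix_i=b\}$. For $\beta>0$ the augmented Lagrangian is $\mathcal{L}_\beta(x_1,\dots,x_p,\lambda)=\sum_{i=1}^pf_i(x_i)-\langle\lambda,\sum_{i=1}^pA_ix_i-b\rangle+\frac\beta2\|\sum_{i=1}^pA_ix_i-b\|^2$. Standing assumptions: (A0) $f_1,\dots,f_{p-1}$ are proper lower semicontinuous; (A1) $A_p\ne0$ and $\mathrm{Im}(A_p)\supseteq\{b\}\cup\mathrm{Im}(A_1)\cup\dots\cup\mathrm{Im}(A_{p-1})$; (A2) $f_p:\mathbb{R}^{n_p}\to\mathbb{R}$ is differentiable with $L_p$-Lipschitz gradient; (A3) there is $\bar\beta\ge0$ with $v(\bar\beta)>-\infty$, where $v(\beta):=\inf_{x}\{\sum_{i=1}^pf_i(x_i)+\frac\beta2\|\sum_{i=1}^pA_ix_i-b\|^2\}$. $A^*$ is the transpose; $\sigma^+_{A_p}$ is the smallest positive eigenvalue of $A_p^*A_p$. Distance generating functions: for $Z\subseteq\mathbb{R}^s$ and $0<m\le M$, $\mathcal{D}_Z(m,M)$ is the class of real-valued functions $w$ differentiable on $Z$ with $w(z')-w(z)-\langle\nabla w(z),z'-z\rangle\ge\frac m2\|z'-z\|^2$ and $\|\nabla w(z)-\nabla w(z')\|\le M\|z-z'\|$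 for all $z,z'\in Z$; its Bregman distance is $(dw)_z(z'):=w(z')-w(z)-\langle\nabla w(z),z'-z\rangle$ for $z\in Z$, $z'\in\mathbb{R}^s$. NEPJ-ADMM: let $Z_i=\mathrm{dom} f_i$, $\gamma_\theta:=\theta/(1-|\theta-1|)^2$. Pick $(x_1^0,\dots,x_p^0,\lambda^0)\in Z_1\times\dots\times Z_p\times\mathbb{R}^d$, $\alpha>0$, $\beta\ge\bar\beta$ with $\beta>0$, $M_i\ge m_i>0$, $\theta\in(0,2)$ such that $\delta_i:=\frac{m_i}{4}-\big(\frac{p-2+\alpha}{2}+\frac{2\gamma_\theta(p+1)}{\sigma^+_{A_p}}\|A_p^*\|^2\big)\beta\max_{1\le l\le p-1}\|A_l\|^2>0$ for $i=1,\dots,p-1$ and $\delta_p:=\frac{m_p}{4}-\big(\frac{\beta(p-1)\|A_p\|^2}{2\alpha}+\frac{\gamma_\theta(p+1)(L_p^2+2M_p^2)}{\beta\sigma^+_{A_p}}\big)>0$. For $k\ge1$: for each $i$ choose $w_i^k\in\mathcal{D}_{Z_i}(m_i,M_i)$ and let $x_i^k$ be an optimal solution (assumed to exist) of $\min_{x_i}\{\mathcal{L}_\beta(x^{k-1}_{<i},x_i,x^{k-1}_{>i},\lambda^{k-1})+(dw_i^k)_{x_i^{k-1}}(x_i)\}$, where $(x_{<i},x_i,x_{>i})$ denotes $(x_1,\dots,x_p)$ with the $i$-th block singled out; then set $\lambda^k=\lambda^{k-1}-\theta\beta(\sum_{i=1}^pA_ix_i^k-b)$. Write $x^k=(x_1^k,\dots,x_p^k)$.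 Notation: for $k\ge1$, $\Delta x_i^k:=x_i^k-x_i^{k-1}$, $\Delta\lambda^k:=\lambda^k-\lambda^{k-1}$, $\Delta w_i^k:=\nabla w_i^k(x_i^k)-\nabla w_i^k(x_i^{k-1})$, $R_p^k:=-\sum_{j=1}^{p-1}\beta A_p^*A_j\Delta x_j^k+\Delta w_p^k$; $R_p^0:=A_p^*\lambda^0-\nabla f_p(x_p^0)$; $u^k:=\nabla f_p(x_p^k)-\nabla f_p(x_p^{k-1})+R_p^k-R_p^{k-1}$ for $k\ge1$; conventions $\Delta\lambda^0:=0$, $\Delta x_i^0:=0$ for $i=1,\dots,p-1$, $\Delta x_p^0:=R_p^0/M_p$. $c_1:=\frac{2|\theta-1|}{\beta\theta(1-|\theta-1|)\sigma^+_{A_p}}$. *)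

theory Defs
  imports "HOL-Analysis.Analysis" "Jordan_Normal_Form.Matrix" "Jordan_Normal_Form.Char_Poly"
begin

text \<open>Vectors of R^s are represented by JNF vectors of dimension s (real vec with
  v in carrier_vec s); a d x n real matrix is an element of carrier_mat d n.
  The adjoint A^* is the transpose.\<close>

definition vnorm :: "real vec \<Rightarrow> real" where
  "vnorm v = sqrt (v \<bullet> v)"

definition opnorm :: "real mat \<Rightarrow> real" where
  "opnorm A = Sup {vnorm (A *\<^sub>v v) | v. v \<in> carrier_vec (dim_col A) \<and> vnorm v \<le> 1}"

definition sigma_plus :: "real mat \<Rightarrow> real" where
  "sigma_plus A = Min {e. eigenvalue (transpose_mat A * A) e \<and> e > 0}"

definition gamma_theta :: "real \<Rightarrow> real" where
  "gamma_theta \<theta> = \<theta> / (1 - \<bar>\<theta> - 1\<bar>)\<^sup>2"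

definition vsum :: "nat \<Rightarrow> ('c \<Rightarrow> real vec) \<Rightarrow> 'c set \<Rightarrow> real vec" where
  "vsum d g I = finsum_vec TYPE(real) d g I"

definition residual :: "nat \<Rightarrow> nat \<Rightarrow> (nat \<Rightarrow> real mat) \<Rightarrow> real vec \<Rightarrow> (nat \<Rightarrow> real vec) \<Rightarrow> real vec" where
  "residual d p A b xs = vsum d (\<lambda>i. A i *\<^sub>v xs i) {1..p} - b"

definition aug_lagr :: "nat \<Rightarrow> nat \<Rightarrow> (nat \<Rightarrow> real vec \<Rightarrow> ereal) \<Rightarrow> (nat \<Rightarrow> real mat) \<Rightarrow> real vec
    \<Rightarrow> real \<Rightarrow> (nat \<Rightarrow> real vec) \<Rightarrow> real vec \<Rightarrow> ereal" where
  "aug_lagr d p f A b \<beta> xs lam =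
     (\<Sum>i\<in>{1..p}. f i (xs i))
     + ereal (- (lam \<bullet> residual d p A b xs) + \<beta> / 2 * (vnorm (residual d p A b xs))\<^sup>2)"

definition val_fun :: "nat \<Rightarrow> (nat \<Rightarrow> nat) \<Rightarrow> nat \<Rightarrow> (nat \<Rightarrow> real vec \<Rightarrow> ereal) \<Rightarrow> (nat \<Rightarrow> real mat)
    \<Rightarrow> real vec \<Rightarrow> real \<Rightarrow> ereal" where
  "val_fun d n p f A b \<beta> =
     (INF xs\<in>{xs. \<forall>i\<in>{1..p}. xs i \<in> carrier_vec (n i)}.
        (\<Sum>i\<in>{1..p}. f i (xs i)) + ereal (\<beta> / 2 * (vnorm (residual d p A b xs))\<^sup>2))"

definition edom :: "nat \<Rightarrow> (real vec \<Rightarrow> ereal) \<Rightarrow> real vec set" where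
  "edom s g = {z \<in> carrier_vec s. g z < \<infinity>}"

definition proper_fun :: "nat \<Rightarrow> (real vec \<Rightarrow> ereal) \<Rightarrow> bool" where
  "proper_fun s g \<longleftrightarrow> (\<forall>z\<in>carrier_vec s. g z \<noteq> -\<infinity>) \<and> (\<exists>z\<in>carrier_vec s. g z \<noteq> \<infinity>)"

definition lsc_fun :: "nat \<Rightarrow> (real vec \<Rightarrow> ereal) \<Rightarrow> bool" where
  "lsc_fun s g \<longleftrightarrow> (\<forall>z zs. z \<in> carrier_vec s \<longrightarrow> (\<forall>j. zs j \<in> carrier_vec s) \<longrightarrow>
      (\<lambda>j. vnorm (zs j - z)) \<longlonglongrightarrow> 0 \<longrightarrow> g z \<le> liminf (\<lambda>j. g (zs j)))"

definition has_grad :: "nat \<Rightarrow> (real vec \<Rightarrow> real) \<Rightarrow> real vec \<Rightarrow> real vec \<Rightarrow> bool" where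
  "has_grad s g gv z \<longleftrightarrow> gv \<in> carrier_vec s \<and>
     (\<forall>\<epsilon>>0. \<exists>\<delta>>0. \<forall>h\<in>carrier_vec s. vnorm h < \<delta> \<longrightarrow>
        \<bar>g (z + h) - g z - gv \<bullet> h\<bar> \<le> \<epsilon> * vnorm h)"

definition bregman :: "(real vec \<Rightarrow> real) \<Rightarrow> (real vec \<Rightarrow> real vec) \<Rightarrow> real vec \<Rightarrow> real vec \<Rightarrow> real" where
  "bregman w gw z z' = w z' - w z - gw z \<bullet> (z' - z)"

definition dgf_class :: "nat \<Rightarrow> real vec set \<Rightarrow> real \<Rightarrow> real \<Rightarrow> (real vec \<Rightarrow> real) \<Rightarrow> (real vec \<Rightarrow> real vec) \<Rightarrow> bool" where
  "dgf_class s Z m M w gw \<longleftrightarrow>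
     (\<forall>z\<in>Z. has_grad s w (gw z) z) \<and>
     (\<forall>z\<in>Z. \<forall>z'\<in>Z. bregman w gw z z' \<ge> m / 2 * (vnorm (z' - z))\<^sup>2) \<and>
     (\<forall>z\<in>Z. \<forall>z'\<in>Z. vnorm (gw z - gw z') \<le> M * vnorm (z - z'))"

definition Rp :: "nat \<Rightarrow> nat \<Rightarrow> (nat \<Rightarrow> real mat) \<Rightarrow> real \<Rightarrow> (real vec \<Rightarrow> real vec)
    \<Rightarrow> (nat \<Rightarrow> nat \<Rightarrow> real vec \<Rightarrow> real vec) \<Rightarrow> (nat \<Rightarrow> nat \<Rightarrow> real vec) \<Rightarrow> (nat \<Rightarrow> real vec) \<Rightarrow> nat \<Rightarrow> real vec" where
  "Rp np p A \<beta> gradfp gw x lam k =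
     (if k = 0 then transpose_mat (A p) *\<^sub>v lam 0 - gradfp (x 0 p)
      else - vsum np (\<lambda>j. \<beta> \<cdot>\<^sub>v ((transpose_mat (A p) * A j) *\<^sub>v (x k j - x (k-1) j))) {1..p-1}
           + (gw p k (x k p) - gw p k (x (k-1) p)))"

end

theory Submission
  imports Defs
begin

(* The first-order condition of the last, smooth block says that \<nabla>f_p(x_p^k) + R_p^k equals
   A_p^* applied to the multiplier \<lambda>^{k-1} + \<Delta>\<lambda>^k/\<theta>.  Differencing two consecutive iterations gives
   \<theta> u^k = A_p^* \<Delta>\<lambda>^k - (1 - \<theta>) A_p^* \<Delta>\<lambda>^{k-1}.  As \<Delta>\<lambda>^k lies in the range of A_p, where
   \<parallel>A_p^* v\<parallel>\<^sup>2 \<ge> \<sigma>\<^sup>+ \<parallel>v\<parallel>\<^sup>2, expanding \<parallel>\<theta> u^k\<parallel>\<^sup>2 with Cauchy-Schwarz yields the first inequality.  The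
   second one follows from the triangle inequality, the Lipschitz bounds for \<nabla>f_p and \<nabla>w_p^k, and
   (a_1 + ... + a_{p+1})\<^sup>2 \<le> (p + 1)(a_1\<^sup>2 + ... + a_{p+1}\<^sup>2).
   The spectral bound is proved variationally: a minimiser of \<parallel>A_p^* v\<parallel>\<^sup>2 on the unit vectors of the
   range of A_p is, by a Lagrange multiplier argument, an eigenvector of A_p^* A_p. *)

no_notation inner (infix \<open>\<bullet>\<close> 70)
no_notation vec_nth (infixl \<open>$\<close> 90)

lemma scalar_prod_self_nonneg: "0 \<le> (v::real vec) \<bullet> v"
  using conjugate_square_ge_0_vec[of v] by simp

lemma scalar_prod_self_eq_0_iff: "(v::real vec) \<in> carrier_vec n \<Longrightarrow> v \<bullet> v = 0 \<longleftrightarrow> v = 0\<^sub>v n"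
  using conjugate_square_eq_0_vec[of v n] by simp

lemma vnorm_nonneg: "0 \<le> vnorm v"
  unfolding vnorm_def using scalar_prod_self_nonneg by simp

lemma vnorm_power2: "(vnorm v)\<^sup>2 = v \<bullet> v"
  unfolding vnorm_def using scalar_prod_self_nonneg by simp

lemma vnorm_zero_vec [simp]: "vnorm (0\<^sub>v n) = 0"
  unfolding vnorm_def by simp

lemma vnorm_eq_0_iff: "v \<in> carrier_vec n \<Longrightarrow> vnorm v = 0 \<longleftrightarrow> v = 0\<^sub>v n"
  unfolding vnorm_def using scalar_prod_self_eq_0_iff by simp

lemma scalar_prod_smult_self: "(c \<cdot>\<^sub>v v) \<bullet> (c \<cdot>\<^sub>v v) = c\<^sup>2 * ((v::real vec) \<bullet> v)"
  unfolding scalar_prod_def by (simp add: sum_distrib_left power2_eq_square ac_simps)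

lemma vnorm_smult: "vnorm (c \<cdot>\<^sub>v v) = \<bar>c\<bar> * vnorm (v::real vec)"
  unfolding vnorm_def scalar_prod_smult_self by (simp add: real_sqrt_mult)

lemma vnorm_uminus: "vnorm (- v) = vnorm (v::real vec)"
  unfolding vnorm_def scalar_prod_def by simp

lemma scalar_prod_add_smult_self:
  assumes "u \<in> carrier_vec n" "h \<in> carrier_vec n"
  shows "(u + t \<cdot>\<^sub>v h) \<bullet> (u + t \<cdot>\<^sub>v h) = u \<bullet> u + 2 * t * (u \<bullet> h) + t\<^sup>2 * ((h::real vec) \<bullet> h)"
  using assms unfolding scalar_prod_def
  by (simp add: sum.distrib sum_distrib_left power2_eq_square algebra_simps)

lemma abs_scalar_prod_le:
  assumes "dim_vec (u::real vec) = dim_vec v"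
  shows "\<bar>u \<bullet> v\<bar> \<le> vnorm u * vnorm v"
proof -
  have "(u \<bullet> v)\<^sup>2 \<le> (u \<bullet> u) * (v \<bullet> v)"
    using Cauchy_Schwarz_ineq_sum[of "\<lambda>i. u $ i" "\<lambda>i. v $ i" "{0..<dim_vec v}"] assms
    unfolding scalar_prod_def by (simp add: power2_eq_square)
  hence "(u \<bullet> v)\<^sup>2 \<le> (vnorm u * vnorm v)\<^sup>2"
    by (simp add: power_mult_distrib vnorm_power2)
  hence "\<bar>u \<bullet> v\<bar> \<le> \<bar>vnorm u * vnorm v\<bar>" by (simp add: abs_le_square_iff)
  thus ?thesis using vnorm_nonneg[of u] vnorm_nonneg[of v] by simp
qed

lemma vnorm_add_le:
  assumes "u \<in> carrier_vec n" "(v::real vec) \<in> carrier_vec n"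
  shows "vnorm (u + v) \<le> vnorm u + vnorm v"
proof -
  have "(vnorm (u + v))\<^sup>2 = u \<bullet> u + 2 * (u \<bullet> v) + v \<bullet> v"
    using assms by (simp add: vnorm_power2 add_scalar_prod_distrib scalar_prod_add_distrib
        comm_scalar_prod[of u n v])
  also have "\<dots> \<le> (vnorm u + vnorm v)\<^sup>2"
    using abs_scalar_prod_le[of u v] assms by (simp add: power2_sum vnorm_power2)
  finally show ?thesis
    using vnorm_nonneg by (meson add_nonneg_nonneg power2_le_imp_le)
qed

lemma vnorm_diff_le:
  assumes "u \<in> carrier_vec n" "(v::real vec) \<in> carrier_vec n"
  shows "vnorm (u - v) \<le> vnorm u + vnorm v"
proof -
  have "u - v = u + (- v)" using assms by auto
  thus ?thesis using vnorm_add_le[of u n "- v"] assms vnorm_uminus by auto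
qed

lemma mult_mat_vec_zero_vec [simp]: "A \<in> carrier_mat r c \<Longrightarrow> A *\<^sub>v 0\<^sub>v c = 0\<^sub>v r"
  by (intro eq_vecI) auto

lemma vsum_carrier: "(\<And>i. i \<in> I \<Longrightarrow> g i \<in> carrier_vec d) \<Longrightarrow> vsum d g I \<in> carrier_vec d"
  unfolding vsum_def by (rule finsum_vec_closed) auto

lemma index_vsum:
  "finite I \<Longrightarrow> (\<And>i. i \<in> I \<Longrightarrow> g i \<in> carrier_vec d) \<Longrightarrow> j < d \<Longrightarrow> vsum d g I $ j = (\<Sum>i\<in>I. g i $ j)"
  unfolding vsum_def by (rule index_finsum_vec) auto

lemma vsum_empty [simp]: "vsum d g {} = 0\<^sub>v d"
  unfolding vsum_def by (rule finsum_vec_empty)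

lemma vsum_insert:
  "finite I \<Longrightarrow> i \<notin> I \<Longrightarrow> (\<And>j. j \<in> insert i I \<Longrightarrow> g j \<in> carrier_vec d) \<Longrightarrow>
   vsum d g (insert i I) = g i + vsum d g I"
  unfolding vsum_def by (rule finsum_vec_insert) auto

lemma vsum_cong:
  assumes I: "finite I" and g: "\<And>i. i \<in> I \<Longrightarrow> g i \<in> carrier_vec d"
    and fg: "\<And>i. i \<in> I \<Longrightarrow> f i = g i"
  shows "vsum d f I = vsum d g I"
proof -
  have f: "\<And>i. i \<in> I \<Longrightarrow> f i \<in> carrier_vec d" using fg g by auto
  have sums: "vsum d f I \<in> carrier_vec d" "vsum d g I \<in> carrier_vec d"
    using vsum_carrier[of I f d] vsum_carrier[of I g d] f g by auto
  show ?thesis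
    by (rule eq_vecI) (use sums fg in \<open>simp_all add: index_vsum[OF I f] index_vsum[OF I g]\<close>)
qed

lemma mult_mat_vec_vsum:
  assumes M: "M \<in> carrier_mat r d" and I: "finite I" and g: "\<And>i. i \<in> I \<Longrightarrow> g i \<in> carrier_vec d"
  shows "M *\<^sub>v vsum d g I = vsum r (\<lambda>i. M *\<^sub>v g i) I"
proof (rule eq_vecI)
  have Mg: "\<And>i. i \<in> I \<Longrightarrow> M *\<^sub>v g i \<in> carrier_vec r" using M g by auto
  have dg: "\<And>i. i \<in> I \<Longrightarrow> dim_vec (g i) = d" using g by auto
  have c1: "vsum r (\<lambda>i. M *\<^sub>v g i) I \<in> carrier_vec r" by (rule vsum_carrier) (rule Mg)
  have c2: "vsum d g I \<in> carrier_vec d" by (rule vsum_carrier) (rule g)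
  show "dim_vec (M *\<^sub>v vsum d g I) = dim_vec (vsum r (\<lambda>i. M *\<^sub>v g i) I)"
    using M c1 by simp
  fix j assume "j < dim_vec (vsum r (\<lambda>i. M *\<^sub>v g i) I)"
  hence j: "j < r" using c1 by simp
  have "(M *\<^sub>v vsum d g I) $ j = (\<Sum>k\<in>{0..<d}. M $$ (j,k) * vsum d g I $ k)"
    using M j c2 by (simp add: scalar_prod_def)
  also have "\<dots> = (\<Sum>k\<in>{0..<d}. \<Sum>i\<in>I. M $$ (j,k) * g i $ k)"
    by (rule sum.cong) (use I g in \<open>auto simp: index_vsum sum_distrib_left\<close>)
  also have "\<dots> = (\<Sum>i\<in>I. \<Sum>k\<in>{0..<d}. M $$ (j,k) * g i $ k)" by (rule sum.swap)
  also have "\<dots> = (\<Sum>i\<in>I. (M *\<^sub>v g i) $ j)"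
    by (rule sum.cong) (use M j dg in \<open>auto simp: scalar_prod_def intro!: sum.cong\<close>)
  also have "\<dots> = vsum r (\<lambda>i. M *\<^sub>v g i) I $ j" using index_vsum[OF I Mg j] by simp
  finally show "(M *\<^sub>v vsum d g I) $ j = vsum r (\<lambda>i. M *\<^sub>v g i) I $ j" .
qed

lemma smult_vsum:
  assumes I: "finite I" and g: "\<And>i. i \<in> I \<Longrightarrow> g i \<in> carrier_vec d"
  shows "c \<cdot>\<^sub>v vsum d g I = vsum d (\<lambda>i. c \<cdot>\<^sub>v g i) I"
proof -
  have g': "\<And>i. i \<in> I \<Longrightarrow> c \<cdot>\<^sub>v g i \<in> carrier_vec d" using g by auto
  have sums: "vsum d g I \<in> carrier_vec d" "vsum d (\<lambda>i. c \<cdot>\<^sub>v g i) I \<in> carrier_vec d"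
    using vsum_carrier[of I g d] vsum_carrier[of I "\<lambda>i. c \<cdot>\<^sub>v g i" d] g g' by auto
  show ?thesis
  proof (rule eq_vecI)
    fix j assume "j < dim_vec (vsum d (\<lambda>i. c \<cdot>\<^sub>v g i) I)"
    hence j: "j < d" using sums by simp
    have "(\<Sum>i\<in>I. (c \<cdot>\<^sub>v g i) $ j) = (\<Sum>i\<in>I. c * g i $ j)"
      by (rule sum.cong) (use j in \<open>simp_all add: carrier_vecD[OF g]\<close>)
    thus "(c \<cdot>\<^sub>v vsum d g I) $ j = vsum d (\<lambda>i. c \<cdot>\<^sub>v g i) I $ j"
      using sums j by (simp add: index_vsum[OF I g] index_vsum[OF I g'] sum_distrib_left)
  qed (use sums in simp)
qed

lemma vsum_diff:
  assumes I: "finite I" and f: "\<And>i. i \<in> I \<Longrightarrow> f i \<in> carrier_vec d"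
    and g: "\<And>i. i \<in> I \<Longrightarrow> g i \<in> carrier_vec d"
  shows "vsum d f I - vsum d g I = vsum d (\<lambda>i. f i - g i) I"
proof -
  have fg: "\<And>i. i \<in> I \<Longrightarrow> f i - g i \<in> carrier_vec d" using f g by auto
  have sums: "vsum d f I \<in> carrier_vec d" "vsum d g I \<in> carrier_vec d"
    "vsum d (\<lambda>i. f i - g i) I \<in> carrier_vec d"
    using vsum_carrier[of I f d] vsum_carrier[of I g d] vsum_carrier[of I "\<lambda>i. f i - g i" d] f g fg
    by auto
  show ?thesis
  proof (rule eq_vecI)
    fix j assume "j < dim_vec (vsum d (\<lambda>i. f i - g i) I)"
    hence j: "j < d" using sums by simp
    have "(\<Sum>i\<in>I. (f i - g i) $ j) = (\<Sum>i\<in>I. f i $ j - g i $ j)"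
      by (rule sum.cong) (use j in \<open>simp_all add: carrier_vecD[OF f] carrier_vecD[OF g]\<close>)
    thus "(vsum d f I - vsum d g I) $ j = vsum d (\<lambda>i. f i - g i) I $ j"
      using sums j by (simp add: index_vsum[OF I f] index_vsum[OF I g] index_vsum[OF I fg] sum_subtractf)
  qed (use sums in simp)
qed

lemma vnorm_vsum_le:
  assumes "finite I" "\<And>i. i \<in> I \<Longrightarrow> g i \<in> carrier_vec d"
  shows "vnorm (vsum d g I) \<le> (\<Sum>i\<in>I. vnorm (g i))"
  using assms
proof (induction I rule: finite_induct)
  case (insert i I)
  have "vnorm (vsum d g (insert i I)) = vnorm (g i + vsum d g I)"
    using insert by (subst vsum_insert) auto
  also have "\<dots> \<le> vnorm (g i) + vnorm (vsum d g I)"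
    using insert by (intro vnorm_add_le[of _ d] vsum_carrier) auto
  also have "\<dots> \<le> vnorm (g i) + (\<Sum>i\<in>I. vnorm (g i))" using insert by auto
  finally show ?case using insert by simp
qed simp

lemma vsum_atLeastAtMost_last:
  assumes "1 \<le> (p::nat)" "\<And>i. i \<in> {1..p} \<Longrightarrow> g i \<in> carrier_vec d"
  shows "vsum d g {1..p} = g p + vsum d g {1..p-1}"
proof -
  have "{1..p} = insert p {1..p-1}" using assms(1) by (cases p) auto
  moreover have "vsum d g (insert p {1..p-1}) = g p + vsum d g {1..p-1}"
    using assms calculation by (intro vsum_insert) auto
  ultimately show ?thesis by simp
qed

lemma bdd_above_opnorm_set:
  assumes M: "M \<in> carrier_mat r c"
  shows "bdd_above {vnorm (M *\<^sub>v v) | v. v \<in> carrier_vec (dim_col M) \<and> vnorm v \<le> 1}"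
proof (rule bdd_aboveI)
  fix y assume "y \<in> {vnorm (M *\<^sub>v v) | v. v \<in> carrier_vec (dim_col M) \<and> vnorm v \<le> 1}"
  then obtain v where y: "y = vnorm (M *\<^sub>v v)" and v: "v \<in> carrier_vec c" "vnorm v \<le> 1"
    using M by auto
  have "(M *\<^sub>v v) \<bullet> (M *\<^sub>v v) = (\<Sum>i\<in>{0..<r}. (row M i \<bullet> v)\<^sup>2)"
    unfolding scalar_prod_def[of "M *\<^sub>v v"] using M by (intro sum.cong) (auto simp: power2_eq_square)
  also have "\<dots> \<le> (\<Sum>i\<in>{0..<r}. (vnorm (row M i))\<^sup>2)"
  proof (rule sum_mono)
    fix i assume "i \<in> {0..<r}"
    hence "\<bar>row M i \<bullet> v\<bar> \<le> vnorm (row M i) * vnorm v" using M v by (intro abs_scalar_prod_le) auto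
    also have "\<dots> \<le> vnorm (row M i)" by (rule mult_left_le[OF v(2) vnorm_nonneg])
    finally show "(row M i \<bullet> v)\<^sup>2 \<le> (vnorm (row M i))\<^sup>2"
      using power_mono[of "\<bar>row M i \<bullet> v\<bar>" _ 2] by simp
  qed
  finally show "y \<le> sqrt (\<Sum>i\<in>{0..<r}. (vnorm (row M i))\<^sup>2)"
    unfolding y vnorm_def by (rule real_sqrt_le_mono)
qed

lemma vnorm_mult_mat_vec_le:
  assumes M: "M \<in> carrier_mat r c" and v: "v \<in> carrier_vec c"
  shows "vnorm (M *\<^sub>v v) \<le> opnorm M * vnorm v"
proof (cases "v = 0\<^sub>v c")
  case True
  have "0 \<le> opnorm M"
    unfolding opnorm_def using M bdd_above_opnorm_set[OF M]
    by (intro cSup_upper2[of 0]) (auto intro!: exI[of _ "0\<^sub>v c"])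
  thus ?thesis using M True by simp
next
  case False
  hence pos: "vnorm v > 0" using v vnorm_eq_0_iff vnorm_nonneg by (metis order_le_less)
  let ?w = "(1 / vnorm v) \<cdot>\<^sub>v v"
  have "vnorm (M *\<^sub>v ?w) \<le> opnorm M"
    unfolding opnorm_def using M v pos bdd_above_opnorm_set[OF M]
    by (intro cSup_upper) (auto simp: vnorm_smult)
  moreover have "vnorm (M *\<^sub>v ?w) = vnorm (M *\<^sub>v v) / vnorm v"
    unfolding mult_mat_vec[OF M v] vnorm_smult using pos by simp
  ultimately show ?thesis using pos by (simp add: pos_divide_le_eq)
qed

definition converges_coordinatewise :: "(nat \<Rightarrow> real vec) \<Rightarrow> real vec \<Rightarrow> nat \<Rightarrow> bool" where
  "converges_coordinatewise X l d \<longleftrightarrow>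
     (\<forall>j. X j \<in> carrier_vec d) \<and> l \<in> carrier_vec d \<and> (\<forall>i<d. (\<lambda>j. X j $ i) \<longlonglongrightarrow> l $ i)"

lemma bounded_imp_convergent_subseq_vec:
  fixes X :: "nat \<Rightarrow> real vec"
  assumes X: "\<And>j. X j \<in> carrier_vec d" and bnd: "\<And>j i. i < d \<Longrightarrow> \<bar>X j $ i\<bar> \<le> 1"
  shows "\<exists>r l. strict_mono r \<and> converges_coordinatewise (X \<circ> r) l d"
proof -
  have "k \<le> d \<Longrightarrow> \<exists>r. strict_mono r \<and> (\<forall>i<k. convergent (\<lambda>j. X (r j) $ i))" for k
  proof (induction k)
    case 0
    show ?case using strict_mono_id by auto
  next
    case (Suc k)
    then obtain r where r: "strict_mono r" "\<forall>i<k. convergent (\<lambda>j. X (r j) $ i)" by auto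
    have "bounded (range (\<lambda>j. X (r j) $ k))"
      unfolding bounded_iff using bnd Suc.prems by (intro exI[of _ 1]) auto
    then obtain l r' where r': "strict_mono r'" "((\<lambda>j. X (r j) $ k) \<circ> r') \<longlonglongrightarrow> l"
      using bounded_imp_convergent_subsequence by blast
    have "convergent (\<lambda>j. X (r (r' j)) $ i)" if i: "i < Suc k" for i
    proof (cases "i = k")
      case True thus ?thesis using r' unfolding convergent_def by (auto simp: o_def)
    next
      case False
      then obtain L where "(\<lambda>j. X (r j) $ i) \<longlonglongrightarrow> L" using r i unfolding convergent_def by (auto simp: less_Suc_eq)
      from LIMSEQ_subseq_LIMSEQ[OF this r'(1)] show ?thesis unfolding convergent_def by (auto simp: o_def)
    qed
    thus ?case using strict_mono_o[OF r(1) r'(1)] by (intro exI[of _ "r \<circ> r'"]) (auto simp: o_def)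
  qed
  then obtain r where r: "strict_mono r" "\<forall>i<d. convergent (\<lambda>j. X (r j) $ i)" by blast
  have "converges_coordinatewise (X \<circ> r) (vec d (\<lambda>i. lim (\<lambda>j. X (r j) $ i))) d"
    unfolding converges_coordinatewise_def using X r(2) by (auto simp: convergent_LIMSEQ_iff)
  thus ?thesis using r(1) by blast
qed

lemma converges_coordinatewise_const: "z \<in> carrier_vec d \<Longrightarrow> converges_coordinatewise (\<lambda>j. z) z d"
  unfolding converges_coordinatewise_def by auto

lemma converges_coordinatewise_mult_mat_vec:
  assumes X: "converges_coordinatewise X l d" and M: "M \<in> carrier_mat r d"
  shows "converges_coordinatewise (\<lambda>j. M *\<^sub>v X j) (M *\<^sub>v l) r"
  unfolding converges_coordinatewise_def
proof (intro conjI allI impI)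
  show "M *\<^sub>v X j \<in> carrier_vec r" for j using X M unfolding converges_coordinatewise_def by auto
  show "M *\<^sub>v l \<in> carrier_vec r" using X M unfolding converges_coordinatewise_def by auto
  fix i assume i: "i < r"
  have dims: "dim_vec (X j) = d" "dim_vec l = d" for j using X unfolding converges_coordinatewise_def by auto
  have "(\<lambda>j. \<Sum>k\<in>{0..<d}. M $$ (i,k) * X j $ k) \<longlonglongrightarrow> (\<Sum>k\<in>{0..<d}. M $$ (i,k) * l $ k)"
    using X unfolding converges_coordinatewise_def by (intro tendsto_intros) auto
  moreover have "(M *\<^sub>v X j) $ i = (\<Sum>k\<in>{0..<d}. M $$ (i,k) * X j $ k)" for j
    using M i by (auto simp: scalar_prod_def dims intro!: sum.cong)
  moreover have "(M *\<^sub>v l) $ i = (\<Sum>k\<in>{0..<d}. M $$ (i,k) * l $ k)"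
    using M i by (auto simp: scalar_prod_def dims intro!: sum.cong)
  ultimately show "(\<lambda>j. (M *\<^sub>v X j) $ i) \<longlonglongrightarrow> (M *\<^sub>v l) $ i" by simp
qed

lemma converges_coordinatewise_scalar_prod:
  assumes "converges_coordinatewise X l d" "converges_coordinatewise Y m d"
  shows "(\<lambda>j. X j \<bullet> Y j) \<longlonglongrightarrow> l \<bullet> m"
proof -
  have dims: "dim_vec (Y j) = d" "dim_vec m = d" for j
    using assms unfolding converges_coordinatewise_def by auto
  have "(\<lambda>j. \<Sum>k\<in>{0..<d}. X j $ k * Y j $ k) \<longlonglongrightarrow> (\<Sum>k\<in>{0..<d}. l $ k * m $ k)"
    using assms unfolding converges_coordinatewise_def by (intro tendsto_intros) auto
  thus ?thesis unfolding scalar_prod_def dims .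
qed

lemma exists_minimizer_on_bounded_closed:
  fixes q :: "real vec \<Rightarrow> real" and K :: "real vec set"
  assumes K: "K \<subseteq> carrier_vec d" "K \<noteq> {}"
    and bnd: "\<And>u i. u \<in> K \<Longrightarrow> i < d \<Longrightarrow> \<bar>u $ i\<bar> \<le> 1"
    and closed: "\<And>X l. (\<And>j. X j \<in> K) \<Longrightarrow> converges_coordinatewise X l d \<Longrightarrow> l \<in> K"
    and cont: "\<And>X l. (\<And>j. X j \<in> K) \<Longrightarrow> converges_coordinatewise X l d \<Longrightarrow> (\<lambda>j. q (X j)) \<longlonglongrightarrow> q l"
    and bdd: "bdd_below (q ` K)"
  shows "\<exists>l\<in>K. \<forall>u\<in>K. q l \<le> q u"
proof -
  define \<mu> where "\<mu> = Inf (q ` K)"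
  have "\<exists>u\<in>K. q u < \<mu> + 1 / (real j + 1)" for j
    using cInf_lessD[of "q ` K" "\<mu> + 1 / (real j + 1)"] K(2) unfolding \<mu>_def by auto
  then obtain X where X: "\<And>j. X j \<in> K" "\<And>j. q (X j) < \<mu> + 1 / (real j + 1)" by metis
  obtain r l where rl: "strict_mono r" "converges_coordinatewise (X \<circ> r) l d"
    using bounded_imp_convergent_subseq_vec[of X d] X K bnd by blast
  have Xr: "\<And>j. (X \<circ> r) j \<in> K" using X by simp
  have "q ((X \<circ> r) j) \<le> \<mu> + 1 / (real j + 1)" for j
  proof -
    have "real j \<le> real (r j)" using strict_mono_imp_increasing[OF rl(1)] by simp
    hence "1 / (real (r j) + 1) \<le> 1 / (real j + 1)" by (simp add: frac_le)
    thus ?thesis using X(2)[of "r j"] by simp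
  qed
  moreover have "(\<lambda>j. \<mu> + 1 / (real j + 1)) \<longlonglongrightarrow> \<mu> + 0"
    using LIMSEQ_Suc[OF lim_inverse_n'] by (intro tendsto_add tendsto_const) (simp add: add.commute)
  ultimately have "q l \<le> \<mu>" using LIMSEQ_le[OF cont[OF Xr rl(2)]] by auto
  moreover have "\<forall>u\<in>K. \<mu> \<le> q u" unfolding \<mu>_def using bdd by (auto intro: cInf_lower)
  ultimately show ?thesis using closed[OF Xr rl(2)] by force
qed

section \<open>The smallest positive eigenvalue of a Gram matrix\<close>

text \<open>The range of \<open>B\<close>, described as the orthogonal complement of \<open>ker B\<^sup>T\<close> so that it is
  evidently closed under limits.\<close>

definition orth_ker_transpose :: "real mat \<Rightarrow> real vec set" where
  "orth_ker_transpose B = {u \<in> carrier_vec (dim_row B).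
     \<forall>z\<in>carrier_vec (dim_row B). transpose_mat B *\<^sub>v z = 0\<^sub>v (dim_col B) \<longrightarrow> u \<bullet> z = 0}"

lemma scalar_prod_mult_mat_vec_transpose:
  assumes B: "B \<in> carrier_mat d n" and y: "y \<in> carrier_vec n" and z: "z \<in> carrier_vec d"
  shows "(B *\<^sub>v y) \<bullet> z = y \<bullet> (transpose_mat B *\<^sub>v (z::real vec))"
  using transpose_vec_mult_scalar[OF B y z] comm_scalar_prod[of y n "transpose_mat B *\<^sub>v z"]
    comm_scalar_prod[of z d "B *\<^sub>v y"] B y z by auto

lemma mult_mat_vec_in_orth_ker_transpose:
  assumes B: "B \<in> carrier_mat d n" and y: "y \<in> carrier_vec n"
  shows "B *\<^sub>v y \<in> orth_ker_transpose B"
  unfolding orth_ker_transpose_def using B y scalar_prod_mult_mat_vec_transpose[OF B y] by auto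

lemma orth_ker_transpose_add_smult:
  "u \<in> orth_ker_transpose B \<Longrightarrow> h \<in> orth_ker_transpose B \<Longrightarrow> u + t \<cdot>\<^sub>v h \<in> orth_ker_transpose B"
  unfolding orth_ker_transpose_def by (auto simp: add_scalar_prod_distrib)

lemma orth_ker_transpose_smult:
  "u \<in> orth_ker_transpose B \<Longrightarrow> t \<cdot>\<^sub>v u \<in> orth_ker_transpose B"
  unfolding orth_ker_transpose_def by auto

lemma orth_ker_transpose_sequentially_closed:
  assumes X: "\<And>j. X j \<in> orth_ker_transpose B"
    and lim: "converges_coordinatewise X l (dim_row B)"
  shows "l \<in> orth_ker_transpose B"
proof -
  have "l \<bullet> z = 0" if z: "z \<in> carrier_vec (dim_row B)" "transpose_mat B *\<^sub>v z = 0\<^sub>v (dim_col B)" for z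
  proof -
    have "(\<lambda>j. X j \<bullet> z) \<longlonglongrightarrow> l \<bullet> z"
      using converges_coordinatewise_scalar_prod[OF lim converges_coordinatewise_const[OF z(1)]] .
    moreover have "(\<lambda>j. X j \<bullet> z) = (\<lambda>j. 0)" using X z unfolding orth_ker_transpose_def by auto
    ultimately show ?thesis using LIMSEQ_unique[OF _ tendsto_const] by metis
  qed
  thus ?thesis using lim unfolding orth_ker_transpose_def converges_coordinatewise_def by auto
qed

lemma rayleigh_unit_minimizer_exists:
  assumes B: "B \<in> carrier_mat d n" and v: "v \<in> orth_ker_transpose B" "v \<bullet> v = 1"
  shows "\<exists>l\<in>orth_ker_transpose B. l \<bullet> l = 1 \<and> (\<forall>w\<in>orth_ker_transpose B. w \<bullet> w = 1 \<longrightarrow>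
           (transpose_mat B *\<^sub>v l) \<bullet> (transpose_mat B *\<^sub>v l) \<le> (transpose_mat B *\<^sub>v w) \<bullet> (transpose_mat B *\<^sub>v w))"
proof -
  define K where "K = {u \<in> orth_ker_transpose B. u \<bullet> u = 1}"
  have K: "K \<subseteq> carrier_vec d" using B unfolding K_def orth_ker_transpose_def by auto
  have "\<exists>l\<in>K. \<forall>u\<in>K. (transpose_mat B *\<^sub>v l) \<bullet> (transpose_mat B *\<^sub>v l) \<le> (transpose_mat B *\<^sub>v u) \<bullet> (transpose_mat B *\<^sub>v u)"
  proof (rule exists_minimizer_on_bounded_closed[where d = d])
    show "K \<noteq> {}" using v unfolding K_def by blast
    show "\<bar>u $ i\<bar> \<le> 1" if "u \<in> K" "i < d" for u i
    proof -
      have "u $ i * u $ i \<le> (\<Sum>k\<in>{0..<d}. u $ k * u $ k)"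
        by (rule member_le_sum) (use that in auto)
      also have "\<dots> = 1" using that K unfolding K_def scalar_prod_def by auto
      finally have "(u $ i)\<^sup>2 \<le> 1" by (simp add: power2_eq_square)
      thus ?thesis by (simp add: abs_square_le_1)
    qed
    show "l \<in> K" if X: "\<And>j. X j \<in> K" and lim: "converges_coordinatewise X l d" for X l
    proof -
      have "(\<lambda>j. X j \<bullet> X j) \<longlonglongrightarrow> l \<bullet> l" by (rule converges_coordinatewise_scalar_prod[OF lim lim])
      moreover have "(\<lambda>j. X j \<bullet> X j) = (\<lambda>j. 1)" using X unfolding K_def by auto
      ultimately have "l \<bullet> l = 1" using LIMSEQ_unique[OF _ tendsto_const] by metis
      moreover have "l \<in> orth_ker_transpose B"
      proof (rule orth_ker_transpose_sequentially_closed)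
        show "X j \<in> orth_ker_transpose B" for j using X unfolding K_def by blast
        show "converges_coordinatewise X l (dim_row B)" using lim B by simp
      qed
      ultimately show ?thesis unfolding K_def by auto
    qed
    show "(\<lambda>j. (transpose_mat B *\<^sub>v X j) \<bullet> (transpose_mat B *\<^sub>v X j))
        \<longlonglongrightarrow> (transpose_mat B *\<^sub>v l) \<bullet> (transpose_mat B *\<^sub>v l)"
      if "converges_coordinatewise X l d" for X l
      using B by (intro converges_coordinatewise_scalar_prod converges_coordinatewise_mult_mat_vec[OF that]) auto
    show "bdd_below ((\<lambda>u. (transpose_mat B *\<^sub>v u) \<bullet> (transpose_mat B *\<^sub>v u)) ` K)"
      using scalar_prod_self_nonneg by (intro bdd_belowI) auto
  qed (rule K)
  thus ?thesis unfolding K_def by auto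
qed

lemma scalar_prod_self_pos: "v \<in> carrier_vec n \<Longrightarrow> v \<noteq> 0\<^sub>v n \<Longrightarrow> 0 < (v::real vec) \<bullet> v"
  using scalar_prod_self_nonneg[of v] scalar_prod_self_eq_0_iff[of v n] by fastforce

lemma rayleigh_minimizer_exists:
  assumes B: "B \<in> carrier_mat d n" and v: "v \<in> orth_ker_transpose B" "v \<noteq> 0\<^sub>v d"
  shows "\<exists>l\<in>orth_ker_transpose B. l \<bullet> l = 1 \<and> (\<forall>w\<in>orth_ker_transpose B.
           ((transpose_mat B *\<^sub>v l) \<bullet> (transpose_mat B *\<^sub>v l)) * (w \<bullet> w)
             \<le> (transpose_mat B *\<^sub>v w) \<bullet> (transpose_mat B *\<^sub>v w))"
proof -
  define q where "q w = (transpose_mat B *\<^sub>v w) \<bullet> (transpose_mat B *\<^sub>v w)" for w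
  have S: "w \<in> orth_ker_transpose B \<Longrightarrow> w \<in> carrier_vec d" for w
    using B unfolding orth_ker_transpose_def by auto
  have normalize: "(1 / sqrt (w \<bullet> w)) \<cdot>\<^sub>v w \<in> orth_ker_transpose B \<and>
      ((1 / sqrt (w \<bullet> w)) \<cdot>\<^sub>v w) \<bullet> ((1 / sqrt (w \<bullet> w)) \<cdot>\<^sub>v w) = 1"
    if "w \<in> orth_ker_transpose B" "w \<noteq> 0\<^sub>v d" for w
  proof -
    have "0 < w \<bullet> w" using scalar_prod_self_pos[OF S[OF that(1)] that(2)] .
    thus ?thesis using orth_ker_transpose_smult[OF that(1)] by (simp add: scalar_prod_smult_self power_divide)
  qed
  obtain l where l: "l \<in> orth_ker_transpose B" "l \<bullet> l = 1"
    and min: "\<And>u. u \<in> orth_ker_transpose B \<Longrightarrow> u \<bullet> u = 1 \<Longrightarrow> q l \<le> q u"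
    using rayleigh_unit_minimizer_exists[OF B] normalize[OF v] unfolding q_def by blast
  have "q l * (w \<bullet> w) \<le> q w" if w: "w \<in> orth_ker_transpose B" for w
  proof (cases "w = 0\<^sub>v d")
    case True thus ?thesis using B by (simp add: q_def)
  next
    case False
    hence pos: "0 < w \<bullet> w" using scalar_prod_self_pos S[OF w] by blast
    have "q l \<le> q ((1 / sqrt (w \<bullet> w)) \<cdot>\<^sub>v w)" using min normalize[OF w False] by blast
    also have "\<dots> = (1 / sqrt (w \<bullet> w))\<^sup>2 * q w"
      unfolding q_def using B S[OF w] by (simp add: mult_mat_vec[of _ n d] scalar_prod_smult_self)
    also have "\<dots> = q w / (w \<bullet> w)" using pos by (simp add: power_divide)
    finally show ?thesis using pos by (simp add: pos_le_divide_eq)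
  qed
  thus ?thesis using l unfolding q_def by auto
qed

lemma linear_plus_quadratic_nonneg_imp_zero:
  fixes a b :: real
  assumes "\<And>t. 0 \<le> a * t + b * t\<^sup>2"
  shows "a = 0"
proof -
  define c where "c = \<bar>b\<bar> + 1"
  have c: "c > 0" "b - c \<le> -1" unfolding c_def by auto
  have "0 \<le> (a * (- a / c) + b * (- a / c)\<^sup>2) * c\<^sup>2" using assms[of "- a / c"] by simp
  also have "\<dots> = a\<^sup>2 * (b - c)" using c by (simp add: field_simps power2_eq_square)
  also have "\<dots> \<le> a\<^sup>2 * (-1)" using c by (intro mult_left_mono) auto
  finally show ?thesis by simp
qed

lemma rayleigh_minimizer_lagrange:
  assumes B: "B \<in> carrier_mat d n" and l: "l \<in> orth_ker_transpose B" "l \<bullet> l = 1"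
    and min: "\<And>w. w \<in> orth_ker_transpose B \<Longrightarrow>
      ((transpose_mat B *\<^sub>v l) \<bullet> (transpose_mat B *\<^sub>v l)) * (w \<bullet> w)
        \<le> (transpose_mat B *\<^sub>v w) \<bullet> (transpose_mat B *\<^sub>v w)"
    and h: "h \<in> orth_ker_transpose B"
  shows "(transpose_mat B *\<^sub>v l) \<bullet> (transpose_mat B *\<^sub>v h)
    = ((transpose_mat B *\<^sub>v l) \<bullet> (transpose_mat B *\<^sub>v l)) * (l \<bullet> h)"
proof -
  define Bt where "Bt = transpose_mat B"
  define \<mu> where "\<mu> = (Bt *\<^sub>v l) \<bullet> (Bt *\<^sub>v l)"
  define a where "a = (Bt *\<^sub>v l) \<bullet> (Bt *\<^sub>v h)"
  have Bt: "Bt \<in> carrier_mat n d" using B unfolding Bt_def by auto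
  have lc: "l \<in> carrier_vec d" and hc: "h \<in> carrier_vec d"
    using l(1) h B unfolding orth_ker_transpose_def by auto
  have "0 \<le> (2 * a - 2 * \<mu> * (l \<bullet> h)) * t + ((Bt *\<^sub>v h) \<bullet> (Bt *\<^sub>v h) - \<mu> * (h \<bullet> h)) * t\<^sup>2" for t
  proof -
    have "Bt *\<^sub>v (l + t \<cdot>\<^sub>v h) = Bt *\<^sub>v l + t \<cdot>\<^sub>v (Bt *\<^sub>v h)"
      using Bt lc hc by (simp add: mult_add_distrib_mat_vec mult_mat_vec)
    hence "(Bt *\<^sub>v (l + t \<cdot>\<^sub>v h)) \<bullet> (Bt *\<^sub>v (l + t \<cdot>\<^sub>v h))
        = \<mu> + 2 * t * a + t\<^sup>2 * ((Bt *\<^sub>v h) \<bullet> (Bt *\<^sub>v h))"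
      unfolding a_def \<mu>_def using scalar_prod_add_smult_self[of "Bt *\<^sub>v l" n "Bt *\<^sub>v h" t] Bt lc hc by simp
    moreover have "(l + t \<cdot>\<^sub>v h) \<bullet> (l + t \<cdot>\<^sub>v h) = 1 + 2 * t * (l \<bullet> h) + t\<^sup>2 * (h \<bullet> h)"
      using scalar_prod_add_smult_self[OF lc hc] l(2) by simp
    moreover have "\<mu> * ((l + t \<cdot>\<^sub>v h) \<bullet> (l + t \<cdot>\<^sub>v h)) \<le> (Bt *\<^sub>v (l + t \<cdot>\<^sub>v h)) \<bullet> (Bt *\<^sub>v (l + t \<cdot>\<^sub>v h))"
      using min[OF orth_ker_transpose_add_smult[OF l(1) h]] unfolding \<mu>_def Bt_def .
    ultimately show ?thesis by (simp add: algebra_simps)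
  qed
  hence "2 * a - 2 * \<mu> * (l \<bullet> h) = 0" by (rule linear_plus_quadratic_nonneg_imp_zero)
  thus ?thesis unfolding a_def \<mu>_def Bt_def by simp
qed

text \<open>By the Lagrange condition, \<open>B B\<^sup>T l - \<mu> l\<close> lies in \<open>orth_ker_transpose B\<close> and is
  orthogonal to all of it, hence vanishes; so \<open>B\<^sup>T l\<close> is an eigenvector of \<open>B\<^sup>T B\<close>.\<close>

lemma rayleigh_minimizer_eigenvalue:
  assumes B: "B \<in> carrier_mat d n" and l: "l \<in> orth_ker_transpose B" "l \<bullet> l = 1"
    and min: "\<And>w. w \<in> orth_ker_transpose B \<Longrightarrow>
      ((transpose_mat B *\<^sub>v l) \<bullet> (transpose_mat B *\<^sub>v l)) * (w \<bullet> w)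
        \<le> (transpose_mat B *\<^sub>v w) \<bullet> (transpose_mat B *\<^sub>v w)"
  defines "\<mu> \<equiv> (transpose_mat B *\<^sub>v l) \<bullet> (transpose_mat B *\<^sub>v l)"
  shows "eigenvalue (transpose_mat B * B) \<mu> \<and> 0 < \<mu>"
proof -
  define Bt where "Bt = transpose_mat B"
  have Bt: "Bt \<in> carrier_mat n d" using B unfolding Bt_def by auto
  have S: "w \<in> orth_ker_transpose B \<Longrightarrow> w \<in> carrier_vec d" for w
    using B unfolding orth_ker_transpose_def by auto
  have lc: "l \<in> carrier_vec d" using S l(1) .
  define g where "g = B *\<^sub>v (Bt *\<^sub>v l)"
  have g: "g \<in> orth_ker_transpose B"
    unfolding g_def using B Bt lc by (intro mult_mat_vec_in_orth_ker_transpose) auto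
  define h where "h = g + (- \<mu>) \<cdot>\<^sub>v l"
  have h: "h \<in> orth_ker_transpose B" unfolding h_def using g l(1) by (rule orth_ker_transpose_add_smult)
  have hc: "h \<in> carrier_vec d" using S h .
  have "h \<bullet> h = g \<bullet> h - \<mu> * (l \<bullet> h)"
    unfolding h_def using S[OF g] lc hc by (simp add: add_scalar_prod_distrib)
  also have "g \<bullet> h = (Bt *\<^sub>v l) \<bullet> (Bt *\<^sub>v h)"
    unfolding g_def Bt_def using B Bt lc hc by (intro scalar_prod_mult_mat_vec_transpose) (auto simp: Bt_def)
  also have "\<dots> = \<mu> * (l \<bullet> h)"
    unfolding Bt_def \<mu>_def using rayleigh_minimizer_lagrange[OF B l min h] .
  finally have h0: "h = 0\<^sub>v d" using scalar_prod_self_eq_0_iff[OF hc] by simp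
  have Bl: "B *\<^sub>v (Bt *\<^sub>v l) = \<mu> \<cdot>\<^sub>v l"
  proof (rule eq_vecI)
    fix i assume "i < dim_vec (\<mu> \<cdot>\<^sub>v l)"
    hence i: "i < d" using lc by simp
    have "h $ i = 0" using h0 i by simp
    thus "(B *\<^sub>v (Bt *\<^sub>v l)) $ i = (\<mu> \<cdot>\<^sub>v l) $ i" using S[OF g] lc i unfolding h_def g_def by simp
  qed (use B lc in simp)
  define e where "e = Bt *\<^sub>v l"
  have ec: "e \<in> carrier_vec n" using Bt lc unfolding e_def by auto
  have e0: "e \<noteq> 0\<^sub>v n"
  proof
    assume "e = 0\<^sub>v n"
    hence "l \<bullet> l = 0" using l(1) lc B unfolding orth_ker_transpose_def e_def Bt_def by auto
    thus False using l(2) by simp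
  qed
  have "0 < \<mu>" using scalar_prod_self_pos[OF ec e0] unfolding \<mu>_def e_def Bt_def .
  moreover have "(Bt * B) *\<^sub>v e = \<mu> \<cdot>\<^sub>v e"
    using Bl Bt B ec lc unfolding e_def by (simp add: assoc_mult_mat_vec mult_mat_vec)
  ultimately show ?thesis
    unfolding eigenvalue_def eigenvector_def Bt_def[symmetric] using ec e0 Bt B by auto
qed

lemma finite_positive_eigenvalues:
  assumes "C \<in> carrier_mat n n"
  shows "finite {e::real. eigenvalue C e \<and> 0 < e}"
proof (rule finite_subset)
  show "{e::real. eigenvalue C e \<and> 0 < e} \<subseteq> {x. poly (char_poly C) x = 0}"
    using eigenvalue_root_char_poly[OF assms] by auto
  show "finite {x. poly (char_poly C) x = 0}"
    using degree_monic_char_poly[OF assms] by (intro poly_roots_finite) auto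
qed

lemma sigma_plus_le_eigenvalue:
  assumes B: "B \<in> carrier_mat d n" and \<mu>: "eigenvalue (transpose_mat B * B) \<mu>" "0 < \<mu>"
  shows "0 < sigma_plus B \<and> sigma_plus B \<le> \<mu>"
proof -
  have fin: "finite {e. eigenvalue (transpose_mat B * B) e \<and> 0 < e}"
    using B by (intro finite_positive_eigenvalues[of _ n]) auto
  have ne: "{e. eigenvalue (transpose_mat B * B) e \<and> 0 < e} \<noteq> {}" using \<mu> by blast
  show ?thesis unfolding sigma_plus_def using fin ne \<mu> by (auto simp: Min_gr_iff intro!: Min_le)
qed

lemma sigma_plus_range_bound:
  assumes B: "B \<in> carrier_mat d n" and v: "v \<in> orth_ker_transpose B" "v \<noteq> 0\<^sub>v d"
  shows "0 < sigma_plus B \<and>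
    sigma_plus B * (v \<bullet> v) \<le> (transpose_mat B *\<^sub>v v) \<bullet> (transpose_mat B *\<^sub>v v)"
proof -
  obtain l where l: "l \<in> orth_ker_transpose B" "l \<bullet> l = 1"
    and min: "\<forall>w\<in>orth_ker_transpose B. ((transpose_mat B *\<^sub>v l) \<bullet> (transpose_mat B *\<^sub>v l)) * (w \<bullet> w)
           \<le> (transpose_mat B *\<^sub>v w) \<bullet> (transpose_mat B *\<^sub>v w)"
    using rayleigh_minimizer_exists[OF B v] by blast
  define \<mu> where "\<mu> = (transpose_mat B *\<^sub>v l) \<bullet> (transpose_mat B *\<^sub>v l)"
  have "eigenvalue (transpose_mat B * B) \<mu> \<and> 0 < \<mu>"
    unfolding \<mu>_def using min by (intro rayleigh_minimizer_eigenvalue[OF B l]) auto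
  hence "0 < sigma_plus B \<and> sigma_plus B \<le> \<mu>" using sigma_plus_le_eigenvalue[OF B] by blast
  moreover have "\<mu> * (v \<bullet> v) \<le> (transpose_mat B *\<^sub>v v) \<bullet> (transpose_mat B *\<^sub>v v)"
    using min v(1) unfolding \<mu>_def by blast
  ultimately show ?thesis using scalar_prod_self_nonneg[of v] by (meson mult_right_mono order_trans)
qed

lemma sigma_plus_image_bound:
  assumes B: "B \<in> carrier_mat d n" and y: "y \<in> carrier_vec n"
  shows "sigma_plus B * ((B *\<^sub>v y) \<bullet> (B *\<^sub>v y))
    \<le> (transpose_mat B *\<^sub>v (B *\<^sub>v y)) \<bullet> (transpose_mat B *\<^sub>v (B *\<^sub>v y))"
proof (cases "B *\<^sub>v y = 0\<^sub>v d")
  case True thus ?thesis using B by simp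
next
  case False
  thus ?thesis using sigma_plus_range_bound[OF B mult_mat_vec_in_orth_ker_transpose[OF B y]] by blast
qed

lemma sigma_plus_pos:
  assumes B: "B \<in> carrier_mat d n" and nz: "B \<noteq> 0\<^sub>m d n"
  shows "0 < sigma_plus B"
proof -
  obtain i j where ij: "i < d" "j < n" "B $$ (i,j) \<noteq> 0"
    using B nz by (metis carrier_matD eq_matI index_zero_mat(1,2,3))
  have "(B *\<^sub>v unit_vec n j) $ i = B $$ (i,j)" using B ij by simp
  hence "B *\<^sub>v unit_vec n j \<noteq> 0\<^sub>v d" using ij by auto
  thus ?thesis
    using sigma_plus_range_bound[OF B mult_mat_vec_in_orth_ker_transpose[OF B unit_vec_carrier]] by blast
qed

section \<open>Gradients and Fermat's rule\<close>

lemma has_grad_carrier: "has_grad N g G z \<Longrightarrow> G \<in> carrier_vec N"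
  unfolding has_grad_def by blast

lemma has_gradD:
  assumes "has_grad N g G z" "0 < \<epsilon>"
  obtains \<delta> where "0 < \<delta>"
    "\<And>k. k \<in> carrier_vec N \<Longrightarrow> vnorm k < \<delta> \<Longrightarrow> \<bar>g (z + k) - g z - G \<bullet> k\<bar> \<le> \<epsilon> * vnorm k"
  using assms unfolding has_grad_def by blast

lemma has_grad_add:
  assumes g: "has_grad N g G z" and h: "has_grad N h H z"
  shows "has_grad N (\<lambda>y. g y + h y) (G + H) z"
  unfolding has_grad_def
proof (intro conjI allI impI)
  have Gc: "G \<in> carrier_vec N" and Hc: "H \<in> carrier_vec N" using g h by (auto dest: has_grad_carrier)
  show "G + H \<in> carrier_vec N" using Gc Hc by simp
  fix \<epsilon> :: real assume "0 < \<epsilon>"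
  hence "0 < \<epsilon> / 2" by simp
  obtain \<delta>1 where \<delta>1: "0 < \<delta>1"
    "\<And>k. k \<in> carrier_vec N \<Longrightarrow> vnorm k < \<delta>1 \<Longrightarrow> \<bar>g (z + k) - g z - G \<bullet> k\<bar> \<le> \<epsilon> / 2 * vnorm k"
    using has_gradD[OF g \<open>0 < \<epsilon> / 2\<close>] by blast
  obtain \<delta>2 where \<delta>2: "0 < \<delta>2"
    "\<And>k. k \<in> carrier_vec N \<Longrightarrow> vnorm k < \<delta>2 \<Longrightarrow> \<bar>h (z + k) - h z - H \<bullet> k\<bar> \<le> \<epsilon> / 2 * vnorm k"
    using has_gradD[OF h \<open>0 < \<epsilon> / 2\<close>] by blast
  show "\<exists>\<delta>>0. \<forall>k\<in>carrier_vec N. vnorm k < \<delta> \<longrightarrow>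
      \<bar>g (z + k) + h (z + k) - (g z + h z) - (G + H) \<bullet> k\<bar> \<le> \<epsilon> * vnorm k"
  proof (intro exI[of _ "min \<delta>1 \<delta>2"] conjI ballI impI)
    fix k :: "real vec" assume k: "k \<in> carrier_vec N" "vnorm k < min \<delta>1 \<delta>2"
    have "(G + H) \<bullet> k = G \<bullet> k + H \<bullet> k" using Gc Hc k(1) by (rule add_scalar_prod_distrib)
    hence "\<bar>g (z + k) + h (z + k) - (g z + h z) - (G + H) \<bullet> k\<bar>
        \<le> \<bar>g (z + k) - g z - G \<bullet> k\<bar> + \<bar>h (z + k) - h z - H \<bullet> k\<bar>" by simp
    also have "\<dots> \<le> \<epsilon> / 2 * vnorm k + \<epsilon> / 2 * vnorm k"
      using \<delta>1(2)[OF k(1)] \<delta>2(2)[OF k(1)] k(2) by (simp add: add_mono)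
    finally show "\<bar>g (z + k) + h (z + k) - (g z + h z) - (G + H) \<bullet> k\<bar> \<le> \<epsilon> * vnorm k" by simp
  qed (use \<delta>1 \<delta>2 in simp)
qed

lemma has_grad_bregman:
  assumes w: "has_grad N w G z" and gz0: "gw z0 \<in> carrier_vec N"
    and z: "z \<in> carrier_vec N" and z0: "z0 \<in> carrier_vec N"
  shows "has_grad N (bregman w gw z0) (G - gw z0) z"
  unfolding has_grad_def
proof (intro conjI allI impI)
  have Gc: "G \<in> carrier_vec N" using w by (rule has_grad_carrier)
  show "G - gw z0 \<in> carrier_vec N" using Gc gz0 by simp
  have same_remainder: "bregman w gw z0 (z + k) - bregman w gw z0 z - (G - gw z0) \<bullet> k
      = w (z + k) - w z - G \<bullet> k" if k: "k \<in> carrier_vec N" for k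
  proof -
    have "z + k - z0 = (z - z0) + k" using z z0 k by auto
    hence "gw z0 \<bullet> (z + k - z0) = gw z0 \<bullet> (z - z0) + gw z0 \<bullet> k"
      using scalar_prod_add_distrib[of "gw z0" N "z - z0" k] z z0 k gz0 by simp
    moreover have "(G - gw z0) \<bullet> k = G \<bullet> k - gw z0 \<bullet> k"
      using Gc gz0 k by (rule minus_scalar_prod_distrib)
    ultimately show ?thesis unfolding bregman_def by simp
  qed
  fix \<epsilon> :: real assume "0 < \<epsilon>"
  then obtain \<delta> where "0 < \<delta>"
    "\<And>k. k \<in> carrier_vec N \<Longrightarrow> vnorm k < \<delta> \<Longrightarrow> \<bar>w (z + k) - w z - G \<bullet> k\<bar> \<le> \<epsilon> * vnorm k"
    using has_gradD[OF w] by blast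
  thus "\<exists>\<delta>>0. \<forall>k\<in>carrier_vec N. vnorm k < \<delta> \<longrightarrow>
      \<bar>bregman w gw z0 (z + k) - bregman w gw z0 z - (G - gw z0) \<bullet> k\<bar> \<le> \<epsilon> * vnorm k"
    using same_remainder by metis
qed

lemma augmented_quadratic_expansion:
  fixes A :: "real mat"
  assumes A: "A \<in> carrier_mat d N" and c: "c \<in> carrier_vec d" and lam: "lam \<in> carrier_vec d"
    and z: "z \<in> carrier_vec N" and k: "k \<in> carrier_vec N"
  shows "(- (lam \<bullet> (c + A *\<^sub>v (z + k))) + \<beta> / 2 * (vnorm (c + A *\<^sub>v (z + k)))\<^sup>2)
       - (- (lam \<bullet> (c + A *\<^sub>v z)) + \<beta> / 2 * (vnorm (c + A *\<^sub>v z))\<^sup>2)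
       - (transpose_mat A *\<^sub>v (\<beta> \<cdot>\<^sub>v (c + A *\<^sub>v z) - lam)) \<bullet> k
       = \<beta> / 2 * (vnorm (A *\<^sub>v k))\<^sup>2"
proof -
  define r where "r = c + A *\<^sub>v z"
  define Ak where "Ak = A *\<^sub>v k"
  have r: "r \<in> carrier_vec d" and Ak: "Ak \<in> carrier_vec d" unfolding r_def Ak_def using A c z k by auto
  have "c + A *\<^sub>v (z + k) = r + 1 \<cdot>\<^sub>v Ak"
    unfolding r_def Ak_def using A c z k by (simp add: mult_add_distrib_mat_vec assoc_add_vec)
  hence "(vnorm (c + A *\<^sub>v (z + k)))\<^sup>2 = r \<bullet> r + 2 * (r \<bullet> Ak) + Ak \<bullet> Ak"
    "lam \<bullet> (c + A *\<^sub>v (z + k)) = lam \<bullet> r + lam \<bullet> Ak"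
    using scalar_prod_add_smult_self[OF r Ak, of 1] scalar_prod_add_distrib[OF lam r Ak]
    by (simp_all add: vnorm_power2)
  moreover have "(transpose_mat A *\<^sub>v (\<beta> \<cdot>\<^sub>v r - lam)) \<bullet> k = \<beta> * (r \<bullet> Ak) - lam \<bullet> Ak"
    using transpose_vec_mult_scalar[OF A k, of "\<beta> \<cdot>\<^sub>v r - lam"] r lam Ak
    by (simp add: Ak_def minus_scalar_prod_distrib)
  ultimately show ?thesis unfolding r_def[symmetric] Ak_def[symmetric] by (simp add: vnorm_power2 algebra_simps)
qed

lemma has_grad_quadratic_remainder:
  assumes G: "G \<in> carrier_vec N"
    and rem: "\<And>k. k \<in> carrier_vec N \<Longrightarrow> \<bar>\<phi> (z + k) - \<phi> z - G \<bullet> k\<bar> \<le> C * (vnorm k)\<^sup>2"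
  shows "has_grad N \<phi> G z"
  unfolding has_grad_def
proof (intro conjI allI impI)
  fix \<epsilon> :: real assume \<epsilon>: "0 < \<epsilon>"
  show "\<exists>\<delta>>0. \<forall>k\<in>carrier_vec N. vnorm k < \<delta> \<longrightarrow> \<bar>\<phi> (z + k) - \<phi> z - G \<bullet> k\<bar> \<le> \<epsilon> * vnorm k"
  proof (intro exI[of _ "\<epsilon> / (\<bar>C\<bar> + 1)"] conjI ballI impI)
    fix k :: "real vec" assume k: "k \<in> carrier_vec N" "vnorm k < \<epsilon> / (\<bar>C\<bar> + 1)"
    have "C * (vnorm k)\<^sup>2 \<le> (\<bar>C\<bar> + 1) * vnorm k * vnorm k"
      using mult_right_mono[of C "\<bar>C\<bar> + 1" "(vnorm k)\<^sup>2"] by (simp add: power2_eq_square mult.assoc)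
    also have "\<dots> \<le> \<epsilon> * vnorm k"
      using k(2) vnorm_nonneg[of k] by (intro mult_right_mono) (auto simp: field_simps)
    finally show "\<bar>\<phi> (z + k) - \<phi> z - G \<bullet> k\<bar> \<le> \<epsilon> * vnorm k" using rem[OF k(1)] by linarith
  qed (use \<epsilon> in simp)
qed (rule G)

lemma has_grad_augmented_quadratic:
  fixes A :: "real mat"
  assumes A: "A \<in> carrier_mat d N" and c: "c \<in> carrier_vec d" and lam: "lam \<in> carrier_vec d"
    and z: "z \<in> carrier_vec N"
  shows "has_grad N (\<lambda>y. - (lam \<bullet> (c + A *\<^sub>v y)) + \<beta> / 2 * (vnorm (c + A *\<^sub>v y))\<^sup>2)
           (transpose_mat A *\<^sub>v (\<beta> \<cdot>\<^sub>v (c + A *\<^sub>v z) - lam)) z"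
proof (rule has_grad_quadratic_remainder)
  show "transpose_mat A *\<^sub>v (\<beta> \<cdot>\<^sub>v (c + A *\<^sub>v z) - lam) \<in> carrier_vec N"
    using A by (intro carrier_vecI) simp
  fix k :: "real vec" assume k: "k \<in> carrier_vec N"
  have "\<bar>\<beta> / 2 * (vnorm (A *\<^sub>v k))\<^sup>2\<bar> \<le> \<bar>\<beta>\<bar> / 2 * (opnorm A * vnorm k)\<^sup>2"
    using vnorm_mult_mat_vec_le[OF A k] vnorm_nonneg
    by (auto simp: abs_mult intro!: mult_left_mono power_mono)
  thus "\<bar>- (lam \<bullet> (c + A *\<^sub>v (z + k))) + \<beta> / 2 * (vnorm (c + A *\<^sub>v (z + k)))\<^sup>2
        - (- (lam \<bullet> (c + A *\<^sub>v z)) + \<beta> / 2 * (vnorm (c + A *\<^sub>v z))\<^sup>2)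
        - (transpose_mat A *\<^sub>v (\<beta> \<cdot>\<^sub>v (c + A *\<^sub>v z) - lam)) \<bullet> k\<bar>
      \<le> \<bar>\<beta>\<bar> / 2 * (opnorm A)\<^sup>2 * (vnorm k)\<^sup>2"
    unfolding augmented_quadratic_expansion[OF A c lam z k] by (simp add: power_mult_distrib)
qed

lemma has_grad_minimizer_eq_0:
  assumes grad: "has_grad N \<phi> G z" and z: "z \<in> carrier_vec N"
    and min: "\<And>y. y \<in> carrier_vec N \<Longrightarrow> \<phi> z \<le> \<phi> y"
  shows "G = 0\<^sub>v N"
proof (rule ccontr)
  assume "G \<noteq> 0\<^sub>v N"
  have Gc: "G \<in> carrier_vec N" using grad by (rule has_grad_carrier)
  have nG: "0 < vnorm G"
    using \<open>G \<noteq> 0\<^sub>v N\<close> vnorm_eq_0_iff[OF Gc] vnorm_nonneg[of G] by linarith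
  obtain \<delta> where \<delta>: "0 < \<delta>"
    and rem: "\<And>k. k \<in> carrier_vec N \<Longrightarrow> vnorm k < \<delta> \<Longrightarrow> \<bar>\<phi> (z + k) - \<phi> z - G \<bullet> k\<bar> \<le> vnorm G / 2 * vnorm k"
    using has_gradD[OF grad, of "vnorm G / 2"] nG by auto
  define t where "t = \<delta> / (2 * vnorm G)"
  have t: "0 < t" "t * vnorm G < \<delta>" unfolding t_def using \<delta> nG by auto
  define k where "k = (- t) \<cdot>\<^sub>v G"
  have k: "k \<in> carrier_vec N" "vnorm k = t * vnorm G" unfolding k_def using Gc t by (auto simp: vnorm_smult)
  have "G \<bullet> k = - t * (vnorm G)\<^sup>2" unfolding k_def using Gc by (simp add: vnorm_power2)
  moreover have "\<bar>\<phi> (z + k) - \<phi> z - G \<bullet> k\<bar> \<le> vnorm G / 2 * (t * vnorm G)"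
    using rem[OF k(1)] k t by simp
  ultimately have "\<phi> (z + k) - \<phi> z \<le> - t * (vnorm G)\<^sup>2 + vnorm G / 2 * (t * vnorm G)" by linarith
  also have "\<dots> < 0" using t nG by (simp add: power2_eq_square field_simps)
  finally show False using min[of "z + k"] k z by simp
qed

lemma theta_step_inequality_real:
  fixes \<beta> \<theta> \<sigma> s V X Y U :: real
  assumes pos: "0 < \<beta>" "0 < \<theta>" "0 < \<sigma>" "0 \<le> s" "s < 1"
    and V: "\<sigma> * V \<le> X" and U: "(1 - s) * (X - s * Y) \<le> \<theta>\<^sup>2 * U"
  shows "1 / (\<beta> * \<theta>) * V + 2 * s / (\<beta> * \<theta> * (1 - s) * \<sigma>) / 2 * (X - Y)
         \<le> \<theta> / (1 - s)\<^sup>2 / (\<beta> * \<sigma>) * U"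
proof -
  define D where "D = \<beta> * \<theta> * \<sigma> * (1 - s)"
  have D: "0 < D" unfolding D_def using pos by simp
  have "(1 / (\<beta> * \<theta>) * V + 2 * s / (\<beta> * \<theta> * (1 - s) * \<sigma>) / 2 * (X - Y)) * D
      = (1 - s) * (\<sigma> * V) + s * (X - Y)" unfolding D_def using pos by (simp add: field_simps)
  also have "\<dots> \<le> (1 - s) * X + s * (X - Y)" using V pos by (intro add_right_mono mult_left_mono) auto
  also have "\<dots> = X - s * Y" by (simp add: algebra_simps)
  also have "\<dots> \<le> \<theta>\<^sup>2 * U / (1 - s)" using U pos by (simp add: pos_le_divide_eq mult.commute)
  also have "\<dots> = (\<theta> / (1 - s)\<^sup>2 / (\<beta> * \<sigma>) * U) * D"
  proof -
    obtain r where r: "s = 1 - r" "0 < r" using pos by (intro that[of "1 - s"]) auto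
    thus ?thesis unfolding D_def r(1) using pos by (simp add: field_simps power2_eq_square)
  qed
  finally show ?thesis using D by (rule mult_right_le_imp_le)
qed

text \<open>With \<open>s = |1 - \<theta>|\<close>, Cauchy--Schwarz and \<open>2 |a| |b| \<le> |a|\<^sup>2 + |b|\<^sup>2\<close> give
  \<open>|\<theta> u|\<^sup>2 = |a - (1 - \<theta>) b|\<^sup>2 \<ge> (1 - s) (|a|\<^sup>2 - s |b|\<^sup>2)\<close>.\<close>

lemma theta_step_inequality:
  fixes a b u v :: "real vec"
  assumes pos: "0 < \<beta>" "0 < \<theta>" "\<theta> < 2" "0 < \<sigma>"
    and vecs: "a \<in> carrier_vec n" "b \<in> carrier_vec n" "u \<in> carrier_vec n"
    and v: "\<sigma> * (v \<bullet> v) \<le> a \<bullet> a"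
    and u: "\<theta> \<cdot>\<^sub>v u = a - (1 - \<theta>) \<cdot>\<^sub>v b"
  shows "1 / (\<beta> * \<theta>) * (vnorm v)\<^sup>2
      + 2 * \<bar>\<theta> - 1\<bar> / (\<beta> * \<theta> * (1 - \<bar>\<theta> - 1\<bar>) * \<sigma>) / 2 * ((vnorm a)\<^sup>2 - (vnorm b)\<^sup>2)
      \<le> gamma_theta \<theta> / (\<beta> * \<sigma>) * (vnorm u)\<^sup>2"
proof -
  define s where "s = \<bar>\<theta> - 1\<bar>"
  define t where "t = 1 - \<theta>"
  have s: "0 \<le> s" "s < 1" "\<bar>t\<bar> = s" "t\<^sup>2 = s\<^sup>2" unfolding s_def t_def using pos by (auto simp: power2_commute)
  have "a - (1 - \<theta>) \<cdot>\<^sub>v b = a + (- t) \<cdot>\<^sub>v b"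
    unfolding t_def using vecs by (intro eq_vecI) (auto simp: algebra_simps)
  hence "\<theta>\<^sup>2 * (u \<bullet> u) = a \<bullet> a - 2 * t * (a \<bullet> b) + s\<^sup>2 * (b \<bullet> b)"
    using arg_cong[OF u, of "\<lambda>w. w \<bullet> w"] scalar_prod_add_smult_self[OF vecs(1,2), of "- t"] s(4)
    by (simp add: scalar_prod_smult_self)
  moreover have "t * (a \<bullet> b) \<le> s * (vnorm a * vnorm b)"
    using abs_scalar_prod_le[of a b] vecs s(1,3) abs_mult[of t "a \<bullet> b"]
    by (metis abs_ge_self carrier_vecD mult_left_mono order_trans)
  moreover have "0 \<le> s * (vnorm a - vnorm b)\<^sup>2" using s by simp
  ultimately have "(1 - s) * (a \<bullet> a - s * (b \<bullet> b)) \<le> \<theta>\<^sup>2 * (u \<bullet> u)"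
    using vnorm_power2[of a] vnorm_power2[of b]
    by (simp add: power2_diff algebra_simps power2_eq_square)
  from theta_step_inequality_real[OF pos(1,2,4) s(1,2) v this]
  show ?thesis unfolding gamma_theta_def s_def[symmetric] by (simp add: vnorm_power2)
qed

lemma square_sum_le_card_sum_squares:
  fixes C :: "nat \<Rightarrow> real" and E F :: real and p :: nat
  assumes "1 \<le> p"
  shows "((\<Sum>j\<in>{1..p-1}. C j) + E + F)\<^sup>2 \<le> (real p + 1) * ((\<Sum>j\<in>{1..p-1}. (C j)\<^sup>2) + E\<^sup>2 + F\<^sup>2)"
proof -
  define g where "g j = (if j = p then E else if j = p + 1 then F else C j)" for j
  have I: "{1..p+1} = insert (p+1) (insert p {1..p-1})" using assms by auto
  have "(\<Sum>j\<in>{1..p-1}. g j) = (\<Sum>j\<in>{1..p-1}. C j)" "(\<Sum>j\<in>{1..p-1}. (g j)\<^sup>2) = (\<Sum>j\<in>{1..p-1}. (C j)\<^sup>2)"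
    by (auto simp: g_def intro!: sum.cong)
  hence "(\<Sum>j\<in>{1..p+1}. g j) = (\<Sum>j\<in>{1..p-1}. C j) + E + F"
    "(\<Sum>j\<in>{1..p+1}. (g j)\<^sup>2) = (\<Sum>j\<in>{1..p-1}. (C j)\<^sup>2) + E\<^sup>2 + F\<^sup>2"
    unfolding I using assms by (simp_all add: g_def)
  thus ?thesis using sum_squared_le_sum_of_squares[of g "{1..p+1}"] by (simp add: algebra_simps)
qed

lemma family_mult_mat_vec_carrier:
  "\<forall>i\<in>I. A i \<in> carrier_mat d (n i) \<Longrightarrow> \<forall>i\<in>I. xs i \<in> carrier_vec (n i) \<Longrightarrow> i \<in> I \<Longrightarrow>
   A i *\<^sub>v xs i \<in> carrier_vec d"
  using mult_mat_vec_carrier by blast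

lemma residual_eq:
  assumes p: "1 \<le> p" and A: "\<forall>i\<in>{1..p}. A i \<in> carrier_mat d (n i)"
    and xs: "\<forall>i\<in>{1..p}. xs i \<in> carrier_vec (n i)"
  shows "residual d p A b xs = A p *\<^sub>v xs p + vsum d (\<lambda>j. A j *\<^sub>v xs j) {1..p-1} - b"
  unfolding residual_def
  by (subst vsum_atLeastAtMost_last[OF p]) (use family_mult_mat_vec_carrier[OF A xs] in auto)

lemma residual_carrier:
  assumes A: "\<forall>i\<in>{1..p}. A i \<in> carrier_mat d (n i)" and b: "b \<in> carrier_vec d"
    and xs: "\<forall>i\<in>{1..p}. xs i \<in> carrier_vec (n i)"
  shows "residual d p A b xs \<in> carrier_vec d"
proof -
  have "vsum d (\<lambda>i. A i *\<^sub>v xs i) {1..p} \<in> carrier_vec d"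
    by (rule vsum_carrier) (rule family_mult_mat_vec_carrier[OF A xs])
  thus ?thesis unfolding residual_def using b by simp
qed

lemma residual_in_image:
  assumes p: "1 \<le> p" and A: "\<forall>i\<in>{1..p}. A i \<in> carrier_mat d (n i)"
    and b: "\<exists>y\<in>carrier_vec (n p). A p *\<^sub>v y = b"
    and im: "\<forall>i\<in>{1..p-1}. \<forall>z\<in>carrier_vec (n i). \<exists>y\<in>carrier_vec (n p). A p *\<^sub>v y = A i *\<^sub>v z"
    and xs: "\<forall>i\<in>{1..p}. xs i \<in> carrier_vec (n i)"
  shows "\<exists>y\<in>carrier_vec (n p). A p *\<^sub>v y = residual d p A b xs"
proof -
  have Ap: "A p \<in> carrier_mat d (n p)" using A p by auto
  have each: "\<exists>y\<in>carrier_vec (n p). A p *\<^sub>v y = A i *\<^sub>v xs i" if "i \<in> {1..p}" for i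
    using that xs im by (cases "i = p") auto
  have "\<exists>y\<in>carrier_vec (n p). A p *\<^sub>v y = vsum d (\<lambda>i. A i *\<^sub>v xs i) I" if "I \<subseteq> {1..p}" for I
  proof -
    have "finite I" using that finite_subset by blast
    thus ?thesis using that
    proof (induction I rule: finite_induct)
      case empty
      show ?case using Ap by (intro bexI[of _ "0\<^sub>v (n p)"]) auto
    next
      case (insert i I)
      obtain yI where yI: "yI \<in> carrier_vec (n p)" "A p *\<^sub>v yI = vsum d (\<lambda>i. A i *\<^sub>v xs i) I"
        using insert.IH insert.prems by auto
      obtain yi where yi: "yi \<in> carrier_vec (n p)" "A p *\<^sub>v yi = A i *\<^sub>v xs i"
        using each insert.prems by auto
      have "vsum d (\<lambda>i. A i *\<^sub>v xs i) (insert i I) = A i *\<^sub>v xs i + vsum d (\<lambda>i. A i *\<^sub>v xs i) I"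
        using insert family_mult_mat_vec_carrier[OF A xs] by (intro vsum_insert) auto
      also have "\<dots> = A p *\<^sub>v (yi + yI)" using Ap yI yi by (simp add: mult_add_distrib_mat_vec)
      finally show ?case using yI yi by auto
    qed
  qed
  then obtain y where y: "y \<in> carrier_vec (n p)" "A p *\<^sub>v y = vsum d (\<lambda>i. A i *\<^sub>v xs i) {1..p}"
    by blast
  obtain yb where yb: "yb \<in> carrier_vec (n p)" "A p *\<^sub>v yb = b" using b by auto
  have "A p *\<^sub>v (y - yb) = residual d p A b xs"
    unfolding residual_def using Ap y yb by (simp add: mult_minus_distrib_mat_vec)
  thus ?thesis using y yb by auto
qed

section \<open>The NEPJ-ADMM iteration\<close>

locale nepj_admm =
  fixes d p :: nat and n :: "nat \<Rightarrow> nat"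
    and f :: "nat \<Rightarrow> real vec \<Rightarrow> ereal" and fp :: "real vec \<Rightarrow> real" and gradfp :: "real vec \<Rightarrow> real vec"
    and A :: "nat \<Rightarrow> real mat" and b :: "real vec"
    and Lp \<beta> \<theta> :: real and m M :: "nat \<Rightarrow> real"
    and w :: "nat \<Rightarrow> nat \<Rightarrow> real vec \<Rightarrow> real" and gw :: "nat \<Rightarrow> nat \<Rightarrow> real vec \<Rightarrow> real vec"
    and x :: "nat \<Rightarrow> nat \<Rightarrow> real vec" and lam :: "nat \<Rightarrow> real vec"
  assumes p2: "2 \<le> p"
    and A_dim: "\<forall>i\<in>{1..p}. A i \<in> carrier_mat d (n i)"
    and b_dim: "b \<in> carrier_vec d"
    and proper: "\<forall>i\<in>{1..p-1}. proper_fun (n i) (f i)"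
    and A1_nz: "A p \<noteq> 0\<^sub>m d (n p)"
    and A1_b: "\<exists>y\<in>carrier_vec (n p). A p *\<^sub>v y = b"
    and A1_im: "\<forall>i\<in>{1..p-1}. \<forall>z\<in>carrier_vec (n i). \<exists>y\<in>carrier_vec (n p). A p *\<^sub>v y = A i *\<^sub>v z"
    and A2_real: "\<forall>z\<in>carrier_vec (n p). f p z = ereal (fp z)"
    and A2_grad: "\<forall>z\<in>carrier_vec (n p). has_grad (n p) fp (gradfp z) z"
    and A2_lip: "\<forall>z\<in>carrier_vec (n p). \<forall>z'\<in>carrier_vec (n p).
                   vnorm (gradfp z - gradfp z') \<le> Lp * vnorm (z - z')"
    and x0: "\<forall>i\<in>{1..p}. x 0 i \<in> edom (n i) (f i)"
    and lam0: "lam 0 \<in> carrier_vec d"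
    and beta: "0 < \<beta>"
    and theta: "0 < \<theta>" "\<theta> < 2"
    and M_pos: "0 < M p"
    and w_class: "\<forall>k\<ge>1. \<forall>i\<in>{1..p}. dgf_class (n i) (edom (n i) (f i)) (m i) (M i) (w i k) (gw i k)"
    and x_opt: "\<forall>k\<ge>1. \<forall>i\<in>{1..p}. x k i \<in> carrier_vec (n i) \<and>
        (\<forall>y\<in>carrier_vec (n i).
           aug_lagr d p f A b \<beta> ((x (k-1))(i := x k i)) (lam (k-1))
             + ereal (bregman (w i k) (gw i k) (x (k-1) i) (x k i))
           \<le> aug_lagr d p f A b \<beta> ((x (k-1))(i := y)) (lam (k-1))
             + ereal (bregman (w i k) (gw i k) (x (k-1) i) y))"
    and lam_upd: "\<forall>k\<ge>1. lam k = lam (k-1) - (\<theta> * \<beta>) \<cdot>\<^sub>v residual d p A b (x k)"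
begin

definition R :: "nat \<Rightarrow> real vec" where
  "R = Rp (n p) p A \<beta> gradfp gw x lam"

definition dx :: "nat \<Rightarrow> nat \<Rightarrow> real vec" where
  "dx k i = (if k = 0 then (if i < p then 0\<^sub>v (n i) else (1 / M p) \<cdot>\<^sub>v R 0) else x k i - x (k-1) i)"

definition dlam :: "nat \<Rightarrow> real vec" where
  "dlam k = (if k = 0 then 0\<^sub>v d else lam k - lam (k-1))"

definition u :: "nat \<Rightarrow> real vec" where
  "u k = gradfp (x k p) - gradfp (x (k-1) p) + R k - R (k-1)"

lemma p_mem: "p \<in> {1..p}"
  using p2 by auto

lemma Ap_carrier: "A p \<in> carrier_mat d (n p)"
  using A_dim p_mem by blast

lemma Apt_carrier: "transpose_mat (A p) \<in> carrier_mat (n p) d"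
  using Ap_carrier by simp

lemma f_not_minf: "i \<in> {1..p} \<Longrightarrow> z \<in> carrier_vec (n i) \<Longrightarrow> f i z \<noteq> -\<infinity>"
  using A2_real proper unfolding proper_fun_def by (cases "i = p") auto

lemma iterates_finite: "\<forall>i\<in>{1..p}. x k i \<in> carrier_vec (n i) \<and> f i (x k i) \<noteq> \<infinity> \<and> f i (x k i) \<noteq> -\<infinity>"
proof (induction k)
  case 0 thus ?case using x0 f_not_minf unfolding edom_def by auto
next
  case (Suc k)
  show ?case
  proof
    fix i assume i: "i \<in> {1..p}"
    have xc: "x (Suc k) i \<in> carrier_vec (n i)" using x_opt i by auto
    have "f i (x (Suc k) i) \<noteq> \<infinity>"
    proof
      assume inf: "f i (x (Suc k) i) = \<infinity>"
      have "(\<Sum>j\<in>{1..p}. f j (((x k)(i := x (Suc k) i)) j)) = \<infinity>"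
        unfolding sum_Pinfty using i inf by (intro conjI bexI[of _ i]) auto
      hence "aug_lagr d p f A b \<beta> ((x k)(i := x (Suc k) i)) (lam k)
           + ereal (bregman (w i (Suc k)) (gw i (Suc k)) (x k i) (x (Suc k) i)) = \<infinity>"
        unfolding aug_lagr_def by simp
      moreover have "(\<Sum>j\<in>{1..p}. f j (x k j)) \<noteq> \<infinity>" using Suc.IH by (simp add: sum_Pinfty)
      hence "aug_lagr d p f A b \<beta> ((x k)(i := x k i)) (lam k)
           + ereal (bregman (w i (Suc k)) (gw i (Suc k)) (x k i) (x k i)) \<noteq> \<infinity>"
        unfolding aug_lagr_def by simp
      moreover have "aug_lagr d p f A b \<beta> ((x k)(i := x (Suc k) i)) (lam k)
           + ereal (bregman (w i (Suc k)) (gw i (Suc k)) (x k i) (x (Suc k) i))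
         \<le> aug_lagr d p f A b \<beta> ((x k)(i := x k i)) (lam k)
           + ereal (bregman (w i (Suc k)) (gw i (Suc k)) (x k i) (x k i))"
        using x_opt i Suc.IH by (metis diff_Suc_1 le_add1 plus_1_eq_Suc)
      ultimately show False by simp
    qed
    thus "x (Suc k) i \<in> carrier_vec (n i) \<and> f i (x (Suc k) i) \<noteq> \<infinity> \<and> f i (x (Suc k) i) \<noteq> -\<infinity>"
      using xc f_not_minf[OF i xc] by auto
  qed
qed

lemma x_carrier: "\<forall>i\<in>{1..p}. x k i \<in> carrier_vec (n i)"
  using iterates_finite by blast

lemma residual_iterate_carrier: "residual d p A b (x k) \<in> carrier_vec d"
  using residual_carrier[OF A_dim b_dim x_carrier] .

lemma lam_carrier: "lam k \<in> carrier_vec d"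
proof (induction k)
  case (Suc k) thus ?case using lam_upd residual_iterate_carrier[of "Suc k"] by simp
qed (rule lam0)

lemma dlam_carrier: "dlam k \<in> carrier_vec d"
  unfolding dlam_def using lam_carrier by simp

lemma dim_lam: "dim_vec (lam k) = d"
  using lam_carrier by simp

lemma dim_dlam: "dim_vec (dlam k) = d"
  using dlam_carrier by simp

lemma gradfp_carrier: "z \<in> carrier_vec (n p) \<Longrightarrow> gradfp z \<in> carrier_vec (n p)"
  using A2_grad has_grad_carrier by blast

lemma dgf_p:
  assumes "1 \<le> k"
  shows "dgf_class (n p) (carrier_vec (n p)) (m p) (M p) (w p k) (gw p k)"
proof -
  have "edom (n p) (f p) = carrier_vec (n p)" using A2_real unfolding edom_def by auto
  thus ?thesis using w_class p_mem assms by metis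
qed

lemma gw_carrier: "1 \<le> k \<Longrightarrow> z \<in> carrier_vec (n p) \<Longrightarrow> gw p k z \<in> carrier_vec (n p)"
  using dgf_p has_grad_carrier unfolding dgf_class_def by blast

lemma partial_sum_carrier: "vsum d (\<lambda>j. A j *\<^sub>v x k j) {1..p-1} \<in> carrier_vec d"
  by (rule vsum_carrier) (use family_mult_mat_vec_carrier[OF A_dim x_carrier] in auto)

lemma block_p_objective:
  assumes k: "1 \<le> k" and y: "y \<in> carrier_vec (n p)"
  defines "c \<equiv> vsum d (\<lambda>j. A j *\<^sub>v x (k-1) j) {1..p-1} - b"
    and "C \<equiv> \<Sum>i\<in>{1..p-1}. real_of_ereal (f i (x (k-1) i))"
  shows "aug_lagr d p f A b \<beta> ((x (k-1))(p := y)) (lam (k-1))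
           + ereal (bregman (w p k) (gw p k) (x (k-1) p) y)
       = ereal (C + ((fp y + (- (lam (k-1) \<bullet> (c + A p *\<^sub>v y)) + \<beta> / 2 * (vnorm (c + A p *\<^sub>v y))\<^sup>2))
                 + bregman (w p k) (gw p k) (x (k-1) p) y))"
proof -
  let ?xs = "(x (k-1))(p := y)"
  have p1: "1 \<le> p" using p2 by simp
  have xs: "\<forall>i\<in>{1..p}. ?xs i \<in> carrier_vec (n i)" using x_carrier y by simp
  have V: "vsum d (\<lambda>j. A j *\<^sub>v x (k-1) j) {1..p-1} \<in> carrier_vec d"
    by (rule partial_sum_carrier)
  have "vsum d (\<lambda>j. A j *\<^sub>v ?xs j) {1..p-1} = vsum d (\<lambda>j. A j *\<^sub>v x (k-1) j) {1..p-1}"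
    by (rule vsum_cong) (use family_mult_mat_vec_carrier[OF A_dim x_carrier] in auto)
  hence "residual d p A b ?xs = c + A p *\<^sub>v y"
    unfolding residual_eq[OF p1 A_dim xs] c_def using V b_dim Ap_carrier y
    by (intro eq_vecI) auto
  moreover have "(\<Sum>i\<in>{1..p}. f i (?xs i)) = ereal C + ereal (fp y)"
  proof -
    have "{1..p} = insert p {1..p-1}" "p \<notin> {1..p-1}" using p2 by auto
    moreover have "(\<Sum>i\<in>{1..p-1}. f i (?xs i)) = (\<Sum>i\<in>{1..p-1}. f i (x (k-1) i))"
      by (intro sum.cong) auto
    ultimately have "(\<Sum>i\<in>{1..p}. f i (?xs i)) = f p y + (\<Sum>i\<in>{1..p-1}. f i (x (k-1) i))" by simp
    also have "(\<Sum>i\<in>{1..p-1}. f i (x (k-1) i)) = (\<Sum>i\<in>{1..p-1}. ereal (real_of_ereal (f i (x (k-1) i))))"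
      using iterates_finite by (intro sum.cong refl) (auto intro!: ereal_real'[symmetric])
    finally show ?thesis using A2_real y unfolding C_def by (simp add: sum_ereal add.commute)
  qed
  ultimately show ?thesis unfolding aug_lagr_def by simp
qed

lemma block_p_stationary:
  assumes k: "1 \<le> k"
  defines "c \<equiv> vsum d (\<lambda>j. A j *\<^sub>v x (k-1) j) {1..p-1} - b"
  shows "gradfp (x k p) + transpose_mat (A p) *\<^sub>v (\<beta> \<cdot>\<^sub>v (c + A p *\<^sub>v x k p) - lam (k-1))
           + (gw p k (x k p) - gw p k (x (k-1) p)) = 0\<^sub>v (n p)"
proof -
  define \<phi> where "\<phi> y = (fp y + (- (lam (k-1) \<bullet> (c + A p *\<^sub>v y)) + \<beta> / 2 * (vnorm (c + A p *\<^sub>v y))\<^sup>2))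
                 + bregman (w p k) (gw p k) (x (k-1) p) y" for y
  have xk: "x k p \<in> carrier_vec (n p)" and xk': "x (k-1) p \<in> carrier_vec (n p)"
    using x_carrier p_mem by blast+
  have c: "c \<in> carrier_vec d" unfolding c_def using b_dim partial_sum_carrier by simp
  have "has_grad (n p) \<phi> (gradfp (x k p) + transpose_mat (A p) *\<^sub>v (\<beta> \<cdot>\<^sub>v (c + A p *\<^sub>v x k p) - lam (k-1))
           + (gw p k (x k p) - gw p k (x (k-1) p))) (x k p)"
    unfolding \<phi>_def
    using dgf_p[OF k] xk xk' Ap_carrier c lam_carrier A2_grad gw_carrier[OF k xk']
    by (intro has_grad_add has_grad_augmented_quadratic has_grad_bregman) (auto simp: dgf_class_def)
  moreover have "\<phi> (x k p) \<le> \<phi> y" if y: "y \<in> carrier_vec (n p)" for y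
    using x_opt k p_mem y block_p_objective[OF k y] block_p_objective[OF k xk]
    unfolding \<phi>_def c_def by fastforce
  ultimately show ?thesis using has_grad_minimizer_eq_0 xk by blast
qed

lemma coupling_eq:
  assumes k: "1 \<le> k"
  defines "D \<equiv> vsum d (\<lambda>j. A j *\<^sub>v (x k j - x (k-1) j)) {1..p-1}"
  shows "vsum d (\<lambda>j. A j *\<^sub>v x k j) {1..p-1} - vsum d (\<lambda>j. A j *\<^sub>v x (k-1) j) {1..p-1} = D"
    and "vsum (n p) (\<lambda>j. \<beta> \<cdot>\<^sub>v ((transpose_mat (A p) * A j) *\<^sub>v (x k j - x (k-1) j))) {1..p-1}
           = \<beta> \<cdot>\<^sub>v (transpose_mat (A p) *\<^sub>v D)"
proof -
  have Aj: "A j \<in> carrier_mat d (n j)" and xj: "x k j \<in> carrier_vec (n j)" "x (k-1) j \<in> carrier_vec (n j)"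
    if "j \<in> {1..p-1}" for j using that A_dim x_carrier by auto
  have Ax: "A j *\<^sub>v (x k j - x (k-1) j) \<in> carrier_vec d" if "j \<in> {1..p-1}" for j
    using Aj[OF that] xj[OF that] by (metis minus_carrier_vec mult_mat_vec_carrier)
  have "vsum d (\<lambda>j. A j *\<^sub>v x k j) {1..p-1} - vsum d (\<lambda>j. A j *\<^sub>v x (k-1) j) {1..p-1}
      = vsum d (\<lambda>j. A j *\<^sub>v x k j - A j *\<^sub>v x (k-1) j) {1..p-1}"
    using family_mult_mat_vec_carrier[OF A_dim x_carrier] by (intro vsum_diff) auto
  also have "\<dots> = D" unfolding D_def
  proof (rule vsum_cong)
    fix j assume j: "j \<in> {1..p-1}"
    show "A j *\<^sub>v x k j - A j *\<^sub>v x (k-1) j = A j *\<^sub>v (x k j - x (k-1) j)"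
      using mult_minus_distrib_mat_vec[OF Aj[OF j] xj[OF j]] by simp
  qed (use Ax in auto)
  finally show "vsum d (\<lambda>j. A j *\<^sub>v x k j) {1..p-1} - vsum d (\<lambda>j. A j *\<^sub>v x (k-1) j) {1..p-1} = D" .
  have M: "(transpose_mat (A p) * A j) *\<^sub>v (x k j - x (k-1) j) \<in> carrier_vec (n p)"
    if "j \<in> {1..p-1}" for j
    using Apt_carrier Aj[OF that] xj[OF that] by (metis minus_carrier_vec mult_carrier_mat mult_mat_vec_carrier)
  have "transpose_mat (A p) *\<^sub>v D = vsum (n p) (\<lambda>j. transpose_mat (A p) *\<^sub>v (A j *\<^sub>v (x k j - x (k-1) j))) {1..p-1}"
    unfolding D_def using Apt_carrier Ax by (intro mult_mat_vec_vsum) auto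
  also have "\<dots> = vsum (n p) (\<lambda>j. (transpose_mat (A p) * A j) *\<^sub>v (x k j - x (k-1) j)) {1..p-1}"
  proof (rule vsum_cong)
    fix j assume j: "j \<in> {1..p-1}"
    have "x k j - x (k-1) j \<in> carrier_vec (n j)" using xj[OF j] by simp
    thus "transpose_mat (A p) *\<^sub>v (A j *\<^sub>v (x k j - x (k-1) j))
        = (transpose_mat (A p) * A j) *\<^sub>v (x k j - x (k-1) j)"
      using Apt_carrier Aj[OF j] by (simp add: assoc_mult_mat_vec)
  qed (use M in auto)
  also have "\<beta> \<cdot>\<^sub>v \<dots> = vsum (n p) (\<lambda>j. \<beta> \<cdot>\<^sub>v ((transpose_mat (A p) * A j) *\<^sub>v (x k j - x (k-1) j))) {1..p-1}"
    by (rule smult_vsum) (use M in auto)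
  finally show "vsum (n p) (\<lambda>j. \<beta> \<cdot>\<^sub>v ((transpose_mat (A p) * A j) *\<^sub>v (x k j - x (k-1) j))) {1..p-1}
           = \<beta> \<cdot>\<^sub>v (transpose_mat (A p) *\<^sub>v D)" ..
qed

lemma block_p_residual_eq:
  assumes k: "1 \<le> k"
  shows "vsum d (\<lambda>j. A j *\<^sub>v x (k-1) j) {1..p-1} - b + A p *\<^sub>v x k p
    = residual d p A b (x k) - vsum d (\<lambda>j. A j *\<^sub>v (x k j - x (k-1) j)) {1..p-1}"
proof -
  have p1: "1 \<le> p" using p2 by simp
  have "x k p \<in> carrier_vec (n p)" using x_carrier p_mem by blast
  thus ?thesis
    unfolding residual_eq[OF p1 A_dim x_carrier] coupling_eq(1)[OF k, symmetric]
    using partial_sum_carrier[of k] partial_sum_carrier[of "k-1"] b_dim Ap_carrier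
    by (intro eq_vecI) auto
qed

lemma block_p_optimality:
  assumes k: "1 \<le> k"
  shows "gradfp (x k p) + R k = transpose_mat (A p) *\<^sub>v (lam (k-1) - \<beta> \<cdot>\<^sub>v residual d p A b (x k))"
proof -
  define At where "At = transpose_mat (A p)"
  define D where "D = vsum d (\<lambda>j. A j *\<^sub>v (x k j - x (k-1) j)) {1..p-1}"
  define r where "r = residual d p A b (x k)"
  define W where "W = gw p k (x k p) - gw p k (x (k-1) p)"
  define P Q L where "P = At *\<^sub>v r" and "Q = At *\<^sub>v D" and "L = At *\<^sub>v lam (k-1)"
  have xk: "x k p \<in> carrier_vec (n p)" and xk': "x (k-1) p \<in> carrier_vec (n p)"
    using x_carrier p_mem by blast+
  have At: "At \<in> carrier_mat (n p) d" unfolding At_def by (rule Apt_carrier)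
  have D: "D \<in> carrier_vec d"
    unfolding D_def coupling_eq(1)[OF k, symmetric] using partial_sum_carrier by simp
  have r: "r \<in> carrier_vec d" unfolding r_def by (rule residual_iterate_carrier)
  have lam': "lam (k-1) \<in> carrier_vec d" by (rule lam_carrier)
  have W: "W \<in> carrier_vec (n p)" unfolding W_def using gw_carrier[OF k] xk xk' by simp
  have g: "gradfp (x k p) \<in> carrier_vec (n p)" using gradfp_carrier xk .
  have PQL: "P \<in> carrier_vec (n p)" "Q \<in> carrier_vec (n p)" "L \<in> carrier_vec (n p)"
    unfolding P_def Q_def L_def using At r D lam' by auto
  have "At *\<^sub>v (\<beta> \<cdot>\<^sub>v (r - D) - lam (k-1)) = \<beta> \<cdot>\<^sub>v (P - Q) - L"
    unfolding P_def Q_def L_def using At r D lam' by (simp add: mult_minus_distrib_mat_vec mult_mat_vec)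
  hence stat: "gradfp (x k p) + (\<beta> \<cdot>\<^sub>v (P - Q) - L) + W = 0\<^sub>v (n p)"
    using block_p_stationary[OF k] unfolding block_p_residual_eq[OF k] At_def D_def r_def W_def by simp
  have "R k = - (\<beta> \<cdot>\<^sub>v Q) + W"
    using k coupling_eq(2)[OF k] unfolding R_def Rp_def At_def Q_def D_def W_def by simp
  moreover have "At *\<^sub>v (lam (k-1) - \<beta> \<cdot>\<^sub>v r) = L - \<beta> \<cdot>\<^sub>v P"
    unfolding P_def L_def using At r lam' by (simp add: mult_minus_distrib_mat_vec mult_mat_vec)
  moreover have "gradfp (x k p) + (- (\<beta> \<cdot>\<^sub>v Q) + W) = L - \<beta> \<cdot>\<^sub>v P"
  proof (rule eq_vecI)
    fix i assume "i < dim_vec (L - \<beta> \<cdot>\<^sub>v P)"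
    hence i: "i < n p" using PQL by simp
    have "(gradfp (x k p) + (\<beta> \<cdot>\<^sub>v (P - Q) - L) + W) $ i = 0" using stat i by simp
    thus "(gradfp (x k p) + (- (\<beta> \<cdot>\<^sub>v Q) + W)) $ i = (L - \<beta> \<cdot>\<^sub>v P) $ i"
      using i g W PQL by (simp add: algebra_simps)
  qed (use g W PQL in simp)
  ultimately show ?thesis unfolding At_def r_def by simp
qed

lemma R_0: "R 0 = transpose_mat (A p) *\<^sub>v lam 0 - gradfp (x 0 p)"
  unfolding R_def Rp_def by simp

text \<open>For \<open>j = 0\<close> the truncated \<open>j - 1 = 0\<close> and \<open>dlam 0 = 0\<close> make this the definition of \<open>R 0\<close>.\<close>

lemma gradient_multiplier_identity:
  "gradfp (x j p) + R j = transpose_mat (A p) *\<^sub>v (lam (j-1) + (1 / \<theta>) \<cdot>\<^sub>v dlam j)"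
proof (cases "j = 0")
  case True
  have "gradfp (x 0 p) \<in> carrier_vec (n p)" using gradfp_carrier x_carrier p_mem by blast
  moreover have "lam 0 + (1 / \<theta>) \<cdot>\<^sub>v 0\<^sub>v d = lam 0" using lam0 by (intro eq_vecI) auto
  ultimately show ?thesis unfolding True R_0 dlam_def using Apt_carrier by (intro eq_vecI) auto
next
  case False
  have "lam (j-1) + (1 / \<theta>) \<cdot>\<^sub>v dlam j = lam (j-1) - \<beta> \<cdot>\<^sub>v residual d p A b (x j)"
    unfolding dlam_def using False lam_upd theta lam_carrier[of "j-1"] residual_iterate_carrier[of j]
    by (intro eq_vecI) (auto simp: field_simps)
  thus ?thesis using block_p_optimality False by simp
qed

lemma R_carrier: "R j \<in> carrier_vec (n p)"
proof -
  have "dim_vec (gradfp (x j p) + R j) = n p"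
    unfolding gradient_multiplier_identity using Apt_carrier by simp
  hence "dim_vec (R j) = n p" by simp
  thus ?thesis by (rule carrier_vecI)
qed

lemma u_multiplier_identity:
  assumes k: "1 \<le> k"
  shows "\<theta> \<cdot>\<^sub>v u k = transpose_mat (A p) *\<^sub>v dlam k - (1 - \<theta>) \<cdot>\<^sub>v (transpose_mat (A p) *\<^sub>v dlam (k-1))"
proof -
  define L where "L j = lam (j-1) + (1 / \<theta>) \<cdot>\<^sub>v dlam j" for j
  have L: "L j \<in> carrier_vec d" for j unfolding L_def using lam_carrier dlam_carrier by simp
  have g: "gradfp (x j p) \<in> carrier_vec (n p)" for j using gradfp_carrier x_carrier p_mem by blast
  have "u k = (gradfp (x k p) + R k) - (gradfp (x (k-1) p) + R (k-1))"
    unfolding u_def using g[of k] g[of "k-1"] R_carrier[of k] R_carrier[of "k-1"]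
    by (intro eq_vecI) auto
  also have "\<dots> = transpose_mat (A p) *\<^sub>v (L k - L (k-1))"
    unfolding gradient_multiplier_identity L_def[symmetric]
    using Apt_carrier L by (simp add: mult_minus_distrib_mat_vec)
  finally have "\<theta> \<cdot>\<^sub>v u k = transpose_mat (A p) *\<^sub>v (\<theta> \<cdot>\<^sub>v (L k - L (k-1)))"
    using Apt_carrier L by (simp add: mult_mat_vec)
  also have "\<theta> \<cdot>\<^sub>v (L k - L (k-1)) = dlam k - (1 - \<theta>) \<cdot>\<^sub>v dlam (k-1)"
  proof -
    have "lam (k-1) - lam (k-1-1) = dlam (k-1)"
      unfolding dlam_def using lam_carrier by (cases "k - 1 = 0") auto
    show ?thesis
    proof (rule eq_vecI)
      fix i assume "i < dim_vec (dlam k - (1 - \<theta>) \<cdot>\<^sub>v dlam (k-1))"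
      hence i: "i < d" using dlam_carrier[of "k-1"] by simp
      have "lam (k-1) $ i - lam (k-1-1) $ i = dlam (k-1) $ i"
        using arg_cong[OF \<open>lam (k-1) - lam (k-1-1) = dlam (k-1)\<close>, of "\<lambda>v. v $ i"] i
        by (simp add: dim_lam)
      thus "(\<theta> \<cdot>\<^sub>v (L k - L (k-1))) $ i = (dlam k - (1 - \<theta>) \<cdot>\<^sub>v dlam (k-1)) $ i"
        unfolding L_def using i theta by (simp add: dim_lam dim_dlam field_simps)
    qed (use L[of "k-1"] in \<open>simp add: dim_dlam\<close>)
  qed
  finally show ?thesis
    using Apt_carrier dlam_carrier by (simp add: mult_minus_distrib_mat_vec mult_mat_vec)
qed

lemma u_carrier: "u k \<in> carrier_vec (n p)"
  unfolding u_def using gradfp_carrier x_carrier p_mem R_carrier by simp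

lemma dlam_in_image: "\<exists>y\<in>carrier_vec (n p). dlam k = A p *\<^sub>v y"
proof (cases "k = 0")
  case True
  thus ?thesis unfolding dlam_def using Ap_carrier by (intro bexI[of _ "0\<^sub>v (n p)"]) auto
next
  case False
  obtain y where y: "y \<in> carrier_vec (n p)" "A p *\<^sub>v y = residual d p A b (x k)"
    using residual_in_image[OF _ A_dim A1_b A1_im x_carrier] p2 by auto
  have "dlam k = A p *\<^sub>v ((- (\<theta> * \<beta>)) \<cdot>\<^sub>v y)"
    unfolding dlam_def using False lam_upd y Ap_carrier lam_carrier[of "k-1"] residual_iterate_carrier[of k]
    by (intro eq_vecI) (auto simp: mult_mat_vec)
  thus ?thesis using y by auto
qed

lemma dual_step_inequality:
  assumes k: "1 \<le> k"
  shows "1 / (\<beta> * \<theta>) * (vnorm (dlam k))\<^sup>2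
      + 2 * \<bar>\<theta> - 1\<bar> / (\<beta> * \<theta> * (1 - \<bar>\<theta> - 1\<bar>) * sigma_plus (A p)) / 2 *
         ((vnorm (transpose_mat (A p) *\<^sub>v dlam k))\<^sup>2 - (vnorm (transpose_mat (A p) *\<^sub>v dlam (k-1)))\<^sup>2)
      \<le> gamma_theta \<theta> / (\<beta> * sigma_plus (A p)) * (vnorm (u k))\<^sup>2"
proof (rule theta_step_inequality)
  obtain y where y: "y \<in> carrier_vec (n p)" "dlam k = A p *\<^sub>v y" using dlam_in_image by blast
  show "sigma_plus (A p) * (dlam k \<bullet> dlam k)
      \<le> (transpose_mat (A p) *\<^sub>v dlam k) \<bullet> (transpose_mat (A p) *\<^sub>v dlam k)"
    unfolding y(2) using sigma_plus_image_bound[OF Ap_carrier y(1)] .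
  show "0 < sigma_plus (A p)" using sigma_plus_pos[OF Ap_carrier A1_nz] .
  show "\<theta> \<cdot>\<^sub>v u k = transpose_mat (A p) *\<^sub>v dlam k - (1 - \<theta>) \<cdot>\<^sub>v (transpose_mat (A p) *\<^sub>v dlam (k-1))"
    using u_multiplier_identity[OF k] .
qed (use beta theta Apt_carrier dlam_carrier u_carrier in auto)

lemma coupling_norm_le:
  assumes k: "1 \<le> k"
  shows "vnorm (vsum (n p) (\<lambda>j. \<beta> \<cdot>\<^sub>v ((transpose_mat (A p) * A j) *\<^sub>v (x k j - x (k-1) j))) {1..p-1})
    \<le> (\<Sum>j\<in>{1..p-1}. \<beta> * opnorm (transpose_mat (A p) * A j) * vnorm (dx k j))"
proof -
  define T where "T j = \<beta> \<cdot>\<^sub>v ((transpose_mat (A p) * A j) *\<^sub>v (x k j - x (k-1) j))" for j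
  have xj: "x k j - x (k-1) j \<in> carrier_vec (n j)" "A j \<in> carrier_mat d (n j)" if "j \<in> {1..p-1}" for j
    using that x_carrier[of k] x_carrier[of "k-1"] A_dim by auto
  have "vnorm (vsum (n p) T {1..p-1}) \<le> (\<Sum>j\<in>{1..p-1}. vnorm (T j))"
    unfolding T_def using xj Apt_carrier
    by (intro vnorm_vsum_le) (auto intro!: mult_mat_vec_carrier[of _ "n p" "n _"])
  also have "\<dots> \<le> (\<Sum>j\<in>{1..p-1}. \<beta> * opnorm (transpose_mat (A p) * A j) * vnorm (dx k j))"
  proof (rule sum_mono)
    fix j assume j: "j \<in> {1..p-1}"
    have "vnorm ((transpose_mat (A p) * A j) *\<^sub>v (x k j - x (k-1) j))
        \<le> opnorm (transpose_mat (A p) * A j) * vnorm (x k j - x (k-1) j)"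
      using xj[OF j] Apt_carrier by (intro vnorm_mult_mat_vec_le) auto
    thus "vnorm (T j) \<le> \<beta> * opnorm (transpose_mat (A p) * A j) * vnorm (dx k j)"
      unfolding T_def dx_def using k beta by (simp add: vnorm_smult)
  qed
  finally show ?thesis unfolding T_def .
qed

lemma R_split:
  "\<exists>S W. S \<in> carrier_vec (n p) \<and> W \<in> carrier_vec (n p) \<and> R k = W - S \<and>
     vnorm S \<le> (\<Sum>j\<in>{1..p-1}. \<beta> * opnorm (transpose_mat (A p) * A j) * vnorm (dx k j)) \<and>
     vnorm W \<le> M p * vnorm (dx k p)"
proof (cases "k = 0")
  case True
  have "(\<Sum>j\<in>{1..p-1}. \<beta> * opnorm (transpose_mat (A p) * A j) * vnorm (dx k j)) = 0"
    unfolding True dx_def by (intro sum.neutral) auto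
  moreover have "M p * vnorm (dx k p) = vnorm (R 0)" unfolding True dx_def using M_pos by (simp add: vnorm_smult)
  ultimately show ?thesis using True R_carrier[of 0] by (intro exI[of _ "0\<^sub>v (n p)"] exI[of _ "R 0"]) auto
next
  case False
  hence k: "1 \<le> k" by simp
  define S where "S = vsum (n p) (\<lambda>j. \<beta> \<cdot>\<^sub>v ((transpose_mat (A p) * A j) *\<^sub>v (x k j - x (k-1) j))) {1..p-1}"
  define W where "W = gw p k (x k p) - gw p k (x (k-1) p)"
  have S: "S \<in> carrier_vec (n p)"
    unfolding S_def coupling_eq(2)[OF k] using Apt_carrier by (intro carrier_vecI) simp
  have xp: "x k p \<in> carrier_vec (n p)" "x (k-1) p \<in> carrier_vec (n p)" using x_carrier p_mem by blast+
  have W: "W \<in> carrier_vec (n p)" unfolding W_def using gw_carrier[OF k] xp by simp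
  have "R k = - S + W" unfolding R_def Rp_def S_def W_def using False by simp
  hence "R k = W - S" using S W by (intro eq_vecI) auto
  moreover have "vnorm W \<le> M p * vnorm (dx k p)"
    using dgf_p[OF k] xp unfolding dgf_class_def W_def dx_def using False by simp
  ultimately show ?thesis using S W coupling_norm_le[OF k] unfolding S_def by blast
qed

lemma u_norm_le:
  assumes k: "1 \<le> k"
  shows "vnorm (u k) \<le> (\<Sum>j\<in>{1..p-1}. \<beta> * opnorm (transpose_mat (A p) * A j) * (vnorm (dx k j) + vnorm (dx (k-1) j)))
      + \<bar>Lp\<bar> * vnorm (dx k p) + M p * (vnorm (dx k p) + vnorm (dx (k-1) p))"
proof -
  obtain S W where SW: "S \<in> carrier_vec (n p)" "W \<in> carrier_vec (n p)" "R k = W - S"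
    "vnorm S \<le> (\<Sum>j\<in>{1..p-1}. \<beta> * opnorm (transpose_mat (A p) * A j) * vnorm (dx k j))"
    "vnorm W \<le> M p * vnorm (dx k p)"
    using R_split by blast
  obtain S' W' where SW': "S' \<in> carrier_vec (n p)" "W' \<in> carrier_vec (n p)" "R (k-1) = W' - S'"
    "vnorm S' \<le> (\<Sum>j\<in>{1..p-1}. \<beta> * opnorm (transpose_mat (A p) * A j) * vnorm (dx (k-1) j))"
    "vnorm W' \<le> M p * vnorm (dx (k-1) p)"
    using R_split by blast
  define G where "G = gradfp (x k p) - gradfp (x (k-1) p)"
  have xp: "x k p \<in> carrier_vec (n p)" "x (k-1) p \<in> carrier_vec (n p)" using x_carrier p_mem by blast+
  have G: "G \<in> carrier_vec (n p)" unfolding G_def using gradfp_carrier xp by simp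
  have "vnorm G \<le> Lp * vnorm (dx k p)"
    using A2_lip xp k unfolding G_def dx_def by simp
  also have "\<dots> \<le> \<bar>Lp\<bar> * vnorm (dx k p)" using vnorm_nonneg by (intro mult_right_mono) auto
  finally have nG: "vnorm G \<le> \<bar>Lp\<bar> * vnorm (dx k p)" .
  have "u k = G + (W - S) - (W' - S')"
    unfolding u_def G_def SW(3) SW'(3) using xp gradfp_carrier SW SW' by (intro eq_vecI) auto
  hence "vnorm (u k) \<le> vnorm G + (vnorm W + vnorm S) + (vnorm W' + vnorm S')"
    using vnorm_add_le[of G "n p" "W - S"] vnorm_diff_le[of "G + (W - S)" "n p" "W' - S'"]
      vnorm_diff_le[OF SW(2,1)] vnorm_diff_le[OF SW'(2,1)] G SW SW' by simp
  also have "\<dots> \<le> \<bar>Lp\<bar> * vnorm (dx k p) + (M p * vnorm (dx k p)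
        + (\<Sum>j\<in>{1..p-1}. \<beta> * opnorm (transpose_mat (A p) * A j) * vnorm (dx k j)))
        + (M p * vnorm (dx (k-1) p) + (\<Sum>j\<in>{1..p-1}. \<beta> * opnorm (transpose_mat (A p) * A j) * vnorm (dx (k-1) j)))"
    using nG SW(4,5) SW'(4,5) by linarith
  finally show ?thesis by (simp add: algebra_simps sum.distrib)
qed

lemma u_norm_sq_le:
  assumes k: "1 \<le> k"
  shows "gamma_theta \<theta> / (\<beta> * sigma_plus (A p)) * (vnorm (u k))\<^sup>2
    \<le> gamma_theta \<theta> * (real p + 1) / (\<beta> * sigma_plus (A p)) *
        ((\<Sum>j\<in>{1..p-1}. \<beta>\<^sup>2 * (opnorm (transpose_mat (A p) * A j))\<^sup>2 * (vnorm (dx k j) + vnorm (dx (k-1) j))\<^sup>2)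
         + (Lp\<^sup>2 + (M p)\<^sup>2) * (vnorm (dx k p) + vnorm (dx (k-1) p))\<^sup>2)"
proof -
  define a b where "a = vnorm (dx k p)" and "b = vnorm (dx (k-1) p)"
  define C where "C j = \<beta> * opnorm (transpose_mat (A p) * A j) * (vnorm (dx k j) + vnorm (dx (k-1) j))" for j
  have ab: "0 \<le> a" "0 \<le> b" unfolding a_def b_def by (simp_all add: vnorm_nonneg)
  have "(vnorm (u k))\<^sup>2 \<le> ((\<Sum>j\<in>{1..p-1}. C j) + \<bar>Lp\<bar> * a + M p * (a + b))\<^sup>2"
    using u_norm_le[OF k] vnorm_nonneg unfolding C_def a_def b_def by (intro power_mono) auto
  also have "\<dots> \<le> (real p + 1) * ((\<Sum>j\<in>{1..p-1}. (C j)\<^sup>2) + (\<bar>Lp\<bar> * a)\<^sup>2 + (M p * (a + b))\<^sup>2)"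
    using p2 by (intro square_sum_le_card_sum_squares) simp
  also have "\<dots> \<le> (real p + 1) * ((\<Sum>j\<in>{1..p-1}. (C j)\<^sup>2) + (Lp\<^sup>2 + (M p)\<^sup>2) * (a + b)\<^sup>2)"
  proof -
    have "a\<^sup>2 \<le> (a + b)\<^sup>2" using ab by (intro power_mono) auto
    hence "(\<bar>Lp\<bar> * a)\<^sup>2 + (M p * (a + b))\<^sup>2 \<le> (Lp\<^sup>2 + (M p)\<^sup>2) * (a + b)\<^sup>2"
      by (simp add: power_mult_distrib mult_left_mono distrib_right)
    thus ?thesis by (intro mult_left_mono) auto
  qed
  also have "(\<Sum>j\<in>{1..p-1}. (C j)\<^sup>2) = (\<Sum>j\<in>{1..p-1}.
      \<beta>\<^sup>2 * (opnorm (transpose_mat (A p) * A j))\<^sup>2 * (vnorm (dx k j) + vnorm (dx (k-1) j))\<^sup>2)"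
    unfolding C_def by (simp add: power_mult_distrib)
  finally have "(vnorm (u k))\<^sup>2 \<le> (real p + 1) * ((\<Sum>j\<in>{1..p-1}.
      \<beta>\<^sup>2 * (opnorm (transpose_mat (A p) * A j))\<^sup>2 * (vnorm (dx k j) + vnorm (dx (k-1) j))\<^sup>2)
      + (Lp\<^sup>2 + (M p)\<^sup>2) * (a + b)\<^sup>2)" .
  moreover have "0 \<le> gamma_theta \<theta> / (\<beta> * sigma_plus (A p))"
    unfolding gamma_theta_def using theta beta sigma_plus_pos[OF Ap_carrier A1_nz] by simp
  ultimately have "gamma_theta \<theta> / (\<beta> * sigma_plus (A p)) * (vnorm (u k))\<^sup>2
    \<le> gamma_theta \<theta> / (\<beta> * sigma_plus (A p)) * ((real p + 1) * ((\<Sum>j\<in>{1..p-1}.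
      \<beta>\<^sup>2 * (opnorm (transpose_mat (A p) * A j))\<^sup>2 * (vnorm (dx k j) + vnorm (dx (k-1) j))\<^sup>2)
      + (Lp\<^sup>2 + (M p)\<^sup>2) * (a + b)\<^sup>2))"
    by (rule mult_left_mono)
  thus ?thesis unfolding a_def b_def by (simp add: ac_simps)
qed

end

theorem mainTheorem4:
  fixes d p :: nat and n :: "nat \<Rightarrow> nat"
    and f :: "nat \<Rightarrow> real vec \<Rightarrow> ereal" and fp :: "real vec \<Rightarrow> real" and gradfp :: "real vec \<Rightarrow> real vec"
    and A :: "nat \<Rightarrow> real mat" and b :: "real vec"
    and Lp \<beta>bar \<alpha> \<beta> \<theta> :: real and m M :: "nat \<Rightarrow> real"
    and w :: "nat \<Rightarrow> nat \<Rightarrow> real vec \<Rightarrow> real" and gw :: "nat \<Rightarrow> nat \<Rightarrow> real vec \<Rightarrow> real vec"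
    and x :: "nat \<Rightarrow> nat \<Rightarrow> real vec" and lam :: "nat \<Rightarrow> real vec"
  assumes p2: "p \<ge> 2"
    and A_dim: "\<forall>i\<in>{1..p}. A i \<in> carrier_mat d (n i)"
    and b_dim: "b \<in> carrier_vec d"
    \<comment> \<open>(A0)\<close>
    and A0: "\<forall>i\<in>{1..p-1}. proper_fun (n i) (f i) \<and> lsc_fun (n i) (f i)"
    \<comment> \<open>(A1)\<close>
    and A1_nz: "A p \<noteq> 0\<^sub>m d (n p)"
    and A1_b: "\<exists>y\<in>carrier_vec (n p). A p *\<^sub>v y = b"
    and A1_im: "\<forall>i\<in>{1..p-1}. \<forall>z\<in>carrier_vec (n i). \<exists>y\<in>carrier_vec (n p). A p *\<^sub>v y = A i *\<^sub>v z"
    \<comment> \<open>(A2): f_p real-valued, differentiable with L_p-Lipschitz gradient gradfp\<close>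
    and A2_real: "\<forall>z\<in>carrier_vec (n p). f p z = ereal (fp z)"
    and A2_grad: "\<forall>z\<in>carrier_vec (n p). has_grad (n p) fp (gradfp z) z"
    and A2_lip: "\<forall>z\<in>carrier_vec (n p). \<forall>z'\<in>carrier_vec (n p).
                   vnorm (gradfp z - gradfp z') \<le> Lp * vnorm (z - z')"
    \<comment> \<open>(A3)\<close>
    and A3: "\<beta>bar \<ge> 0" "val_fun d n p f A b \<beta>bar > -\<infinity>"
    \<comment> \<open>parameters of NEPJ-ADMM\<close>
    and x0: "\<forall>i\<in>{1..p}. x 0 i \<in> edom (n i) (f i)"
    and lam0: "lam 0 \<in> carrier_vec d"
    and alpha: "\<alpha> > 0"
    and beta: "\<beta> \<ge> \<beta>bar" "\<beta> > 0"
    and mM: "\<forall>i\<in>{1..p}. 0 < m i \<and> m i \<le> M i"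
    and theta: "0 < \<theta>" "\<theta> < 2"
    and delta_i: "\<forall>i\<in>{1..p-1}. m i / 4
        - ((real p - 2 + \<alpha>) / 2 + 2 * gamma_theta \<theta> * (real p + 1) / sigma_plus (A p)
              * (opnorm (transpose_mat (A p)))\<^sup>2)
          * \<beta> * Max ((\<lambda>l. (opnorm (A l))\<^sup>2) ` {1..p-1}) > 0"
    and delta_p: "m p / 4 - (\<beta> * (real p - 1) * (opnorm (A p))\<^sup>2 / (2 * \<alpha>)
        + gamma_theta \<theta> * (real p + 1) * (Lp\<^sup>2 + 2 * (M p)\<^sup>2) / (\<beta> * sigma_plus (A p))) > 0"
    \<comment> \<open>the iteration, k \<ge> 1\<close>
    and w_class: "\<forall>k\<ge>1. \<forall>i\<in>{1..p}. dgf_class (n i) (edom (n i) (f i)) (m i) (M i) (w i k) (gw i k)"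
    and x_opt: "\<forall>k\<ge>1. \<forall>i\<in>{1..p}. x k i \<in> carrier_vec (n i) \<and>
        (\<forall>y\<in>carrier_vec (n i).
           aug_lagr d p f A b \<beta> ((x (k-1))(i := x k i)) (lam (k-1))
             + ereal (bregman (w i k) (gw i k) (x (k-1) i) (x k i))
           \<le> aug_lagr d p f A b \<beta> ((x (k-1))(i := y)) (lam (k-1))
             + ereal (bregman (w i k) (gw i k) (x (k-1) i) y))"
    and lam_upd: "\<forall>k\<ge>1. lam k = lam (k-1) - (\<theta> * \<beta>) \<cdot>\<^sub>v residual d p A b (x k)"
  shows "\<forall>k\<ge>1.
     (let R = Rp (n p) p A \<beta> gradfp gw x lam;
          dx = (\<lambda>k i. if k = 0 then (if i < p then 0\<^sub>v (n i) else (1 / M p) \<cdot>\<^sub>v R 0)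
                       else x k i - x (k-1) i);
          dlam = (\<lambda>k. if k = 0 then 0\<^sub>v d else lam k - lam (k-1));
          u = (\<lambda>k. gradfp (x k p) - gradfp (x (k-1) p) + R k - R (k-1));
          c1 = 2 * \<bar>\<theta> - 1\<bar> / (\<beta> * \<theta> * (1 - \<bar>\<theta> - 1\<bar>) * sigma_plus (A p));
          Theta = 1 / (\<beta> * \<theta>) * (vnorm (dlam k))\<^sup>2
                  + c1 / 2 * ((vnorm (transpose_mat (A p) *\<^sub>v dlam k))\<^sup>2
                              - (vnorm (transpose_mat (A p) *\<^sub>v dlam (k-1)))\<^sup>2)
      in Theta \<le> gamma_theta \<theta> / (\<beta> * sigma_plus (A p)) * (vnorm (u k))\<^sup>2 \<and>
         gamma_theta \<theta> / (\<beta> * sigma_plus (A p)) * (vnorm (u k))\<^sup>2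
           \<le> gamma_theta \<theta> * (real p + 1) / (\<beta> * sigma_plus (A p)) *
              ((\<Sum>j\<in>{1..p-1}. \<beta>\<^sup>2 * (opnorm (transpose_mat (A p) * A j))\<^sup>2
                     * (vnorm (dx k j) + vnorm (dx (k-1) j))\<^sup>2)
               + (Lp\<^sup>2 + (M p)\<^sup>2) * (vnorm (dx k p) + vnorm (dx (k-1) p))\<^sup>2))"
proof -
  interpret nepj_admm d p n f fp gradfp A b Lp \<beta> \<theta> m M w gw x lam
  proof
    show "\<forall>i\<in>{1..p-1}. proper_fun (n i) (f i)" using A0 by blast
    have "0 < m p \<and> m p \<le> M p" using mM p2 by simp
    thus "0 < M p" by linarith
  qed (fact assms)+
  show ?thesis
    using dual_step_inequality u_norm_sq_le unfolding Let_def dx_def dlam_def u_def R_def by blast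
qed

end
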